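(* Let $G=(V,E)$ be a Generalized Bartlett graph with $|V|=p$, and let $\sigma$ be a Generalized Bartlett ordering for $G$. Suppose $\Omega\in\mathbb{P}_{G_\sigma}$ follows a generalized $G$-Wishart distribution with parameters $U$ and $\boldsymbol\delta$, where $U$ is positive definite and $\delta_i>0$ for all $i$. Let $\Omega=LDL^T$ be the modified Cholesky decomposition and define $\widetilde D_1=D_1$, $\widetilde D_k=D_k/D_{k-1}$ for $k\ge2$. Then (i) for every independent entry $L_{ij}$ ($i>j$, $(i,j)\in E_\sigma$), the conditional distribution of $L_{ij}$ given all other entries of $L_I$ and $\widetilde D=(\widetilde D_1,\dots,\widetilde D_p)$ is univariate normal; (ii) for every $k$, the conditional distribution of $\widetilde D_k$ given $L_I$ and $\{\widetilde D_{k'}\}_{k'\neq k}$ is either a Generalized Inverse Gaussian or a Gamma distribution.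
   Context: For an undirected graph $G=(V,E)$ with $|V|=p$ and an ordering $\sigma$ (a bijection $V\to\{1,\dots,p\}$), the ordered graph $G_\sigma$ has vertex set $\{1,\dots,p\}$ and edge set $E_\sigma=\{(i,j):(\sigma^{-1}(i),\sigma^{-1}(j))\in E\}$. $\mathbb{P}_{G_\sigma}$ is the set of $p\times p$ symmetric positive definite $\Omega$ with $\Omega_{ij}=0$ for $i\ne j$, $(i,j)\notin E_\sigma$. Modified Cholesky: $\Omega=LDL^T$, $L$ unit lower triangular, $D=\mathrm{diag}(D_1,\dots,D_p)$, $D_i>0$. $L_I=\{L_{ij}:i>j,(i,j)\in E_\sigma\}$; $\Omega\mapsto(L_I,D)$ is a bijection $\mathbb{P}_{G_\sigma}\to\mathbb{R}^{|L_I|}\times(0,\infty)^p$. The generalized $G$-Wishart distribution with parameters $U,\boldsymbol\delta$ has density on $\mathbb{P}_{G_\sigma}$ proportional to $\prod_i D_i^{\delta_i/2}\exp(-\tfrac12\mathrm{tr}(\Omega U))$ (Lebesgue measure on free entries of $\Omega$). Triangulation: given $\sigma$, set $E^\sigma_0=E$ and for $i=1,\dots,p-2$ let $E^\sigma_i=E^\sigma_{i-1}\cup\{\{u,v\}: u\ne v,\ \sigma(u)>i,\ \sigma(v)>i,\ \{u,\sigma^{-1}(i)\}\in E^\sigma_{i-1},\ \{v,\sigma^{-1}(i)\}\in E^\sigma_{i-1}\}$; put $D^\sigma(E)=E^\sigma_{p-2}$. $G$ is a Generalized Bartlett graph if there is an ordering $\sigma$ (a Generalized Bartlett ordering) such that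 there are no vertices $u,v,w$ with $\{u,v\},\{v,w\},\{u,w\}\notin E$ but $\{u,v\},\{v,w\},\{u,w\}\in D^\sigma(E)$. A Generalized Inverse Gaussian distribution on $(0,\infty)$ has density proportional to $x^{\alpha}\exp(-a x-b/x)$ with $a,b>0$. *)

theory Defs
  imports "HOL-Probability.Probability"
begin

definition simple_graph :: "'a set \<Rightarrow> 'a set set \<Rightarrow> bool" where
  "simple_graph V E \<longleftrightarrow> finite V \<and> E \<subseteq> {{u, v} | u v. u \<in> V \<and> v \<in> V \<and> u \<noteq> v}"

definition is_ordering :: "'a set \<Rightarrow> ('a \<Rightarrow> nat) \<Rightarrow> bool" where
  "is_ordering V \<sigma> \<longleftrightarrow> bij_betw \<sigma> V {1..card V}"

fun fill_edges :: "'a set \<Rightarrow> 'a set set \<Rightarrow> ('a \<Rightarrow> nat) \<Rightarrow> nat \<Rightarrow> 'a set set" where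
  "fill_edges V E \<sigma> 0 = E"
| "fill_edges V E \<sigma> (Suc i) =
     fill_edges V E \<sigma> i \<union>
     {{u, v} | u v. u \<noteq> v \<and> u \<in> V \<and> v \<in> V \<and> \<sigma> u > Suc i \<and> \<sigma> v > Suc i \<and>
        {u, inv_into V \<sigma> (Suc i)} \<in> fill_edges V E \<sigma> i \<and>
        {v, inv_into V \<sigma> (Suc i)} \<in> fill_edges V E \<sigma> i}"

definition triangulation :: "'a set \<Rightarrow> 'a set set \<Rightarrow> ('a \<Rightarrow> nat) \<Rightarrow> 'a set set" where
  "triangulation V E \<sigma> = fill_edges V E \<sigma> (card V - 2)"

definition GB_ordering :: "'a set \<Rightarrow> 'a set set \<Rightarrow> ('a \<Rightarrow> nat) \<Rightarrow> bool" where
  "GB_ordering V E \<sigma> \<longleftrightarrow> is_ordering V \<sigma> \<and>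
     \<not> (\<exists>u v w. {u, v} \<notin> E \<and> {v, w} \<notin> E \<and> {u, w} \<notin> E \<and>
        {u, v} \<in> triangulation V E \<sigma> \<and> {v, w} \<in> triangulation V E \<sigma> \<and>
        {u, w} \<in> triangulation V E \<sigma>)"

definition GB_graph :: "'a set \<Rightarrow> 'a set set \<Rightarrow> bool" where
  "GB_graph V E \<longleftrightarrow> (\<exists>\<sigma>. GB_ordering V E \<sigma>)"

definition ord_edge :: "'a set \<Rightarrow> 'a set set \<Rightarrow> ('a \<Rightarrow> nat) \<Rightarrow> nat \<Rightarrow> nat \<Rightarrow> bool" where
  "ord_edge V E \<sigma> i j \<longleftrightarrow> {inv_into V \<sigma> i, inv_into V \<sigma> j} \<in> E"

text \<open>Indices of the free entries of Omega in P_{G_sigma} (lower triangle incl. diagonal).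
  The same index set indexes (L_I, D~): off-diagonal entries are L_I, diagonal ones D~.\<close>
definition free_idx :: "'a set \<Rightarrow> 'a set set \<Rightarrow> ('a \<Rightarrow> nat) \<Rightarrow> (nat \<times> nat) set" where
  "free_idx V E \<sigma> = {(i, j). i \<in> {1..card V} \<and> j \<in> {1..card V} \<and> j \<le> i \<and>
                            (i = j \<or> ord_edge V E \<sigma> i j)}"

definition omega_of :: "'a set \<Rightarrow> 'a set set \<Rightarrow> ('a \<Rightarrow> nat) \<Rightarrow> (nat \<times> nat \<Rightarrow> real) \<Rightarrow> nat \<Rightarrow> nat \<Rightarrow> real" where
  "omega_of V E \<sigma> x i j =
     (if (max i j, min i j) \<in> free_idx V E \<sigma> then x (max i j, min i j) else 0)"

definition sym_pd :: "nat \<Rightarrow> (nat \<Rightarrow> nat \<Rightarrow> real) \<Rightarrow> bool" where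
  "sym_pd p A \<longleftrightarrow> (\<forall>i\<in>{1..p}. \<forall>j\<in>{1..p}. A i j = A j i) \<and>
     (\<forall>v::nat \<Rightarrow> real. (\<exists>i\<in>{1..p}. v i \<noteq> 0) \<longrightarrow>
        (\<Sum>i=1..p. \<Sum>j=1..p. v i * A i j * v j) > 0)"

definition is_mod_chol :: "nat \<Rightarrow> (nat \<Rightarrow> nat \<Rightarrow> real) \<Rightarrow> (nat \<Rightarrow> nat \<Rightarrow> real) \<Rightarrow> (nat \<Rightarrow> real) \<Rightarrow> bool" where
  "is_mod_chol p \<Omega> L D \<longleftrightarrow>
     (\<forall>i\<in>{1..p}. L i i = 1) \<and>
     (\<forall>i\<in>{1..p}. \<forall>j\<in>{1..p}. i < j \<longrightarrow> L i j = 0) \<and>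
     (\<forall>i j. i \<notin> {1..p} \<or> j \<notin> {1..p} \<longrightarrow> L i j = 0) \<and>
     (\<forall>k\<in>{1..p}. D k > 0) \<and> (\<forall>k. k \<notin> {1..p} \<longrightarrow> D k = 0) \<and>
     (\<forall>i\<in>{1..p}. \<forall>j\<in>{1..p}. \<Omega> i j = (\<Sum>k=1..p. L i k * D k * L j k))"

definition chol_L :: "nat \<Rightarrow> (nat \<Rightarrow> nat \<Rightarrow> real) \<Rightarrow> nat \<Rightarrow> nat \<Rightarrow> real" where
  "chol_L p \<Omega> = fst (THE (L, D). is_mod_chol p \<Omega> L D)"

definition chol_D :: "nat \<Rightarrow> (nat \<Rightarrow> nat \<Rightarrow> real) \<Rightarrow> nat \<Rightarrow> real" where
  "chol_D p \<Omega> = snd (THE (L, D). is_mod_chol p \<Omega> L D)"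

definition Dtilde :: "(nat \<Rightarrow> real) \<Rightarrow> nat \<Rightarrow> real" where
  "Dtilde D k = (if k = 1 then D 1 else D k / D (k - 1))"

definition free_lebesgue :: "'a set \<Rightarrow> 'a set set \<Rightarrow> ('a \<Rightarrow> nat) \<Rightarrow> (nat \<times> nat \<Rightarrow> real) measure" where
  "free_lebesgue V E \<sigma> = PiM (free_idx V E \<sigma>) (\<lambda>_. lborel)"

definition gw_unnorm :: "'a set \<Rightarrow> 'a set set \<Rightarrow> ('a \<Rightarrow> nat) \<Rightarrow> (nat \<Rightarrow> nat \<Rightarrow> real) \<Rightarrow> (nat \<Rightarrow> real)
    \<Rightarrow> (nat \<times> nat \<Rightarrow> real) \<Rightarrow> real" where
  "gw_unnorm V E \<sigma> U \<delta> x =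
     (let p = card V; \<Omega> = omega_of V E \<sigma> x; D = chol_D p \<Omega> in
      if sym_pd p \<Omega> then
        (\<Prod>k=1..p. D k powr (\<delta> k / 2)) * exp (- (1/2) * (\<Sum>i=1..p. \<Sum>j=1..p. \<Omega> i j * U j i))
      else 0)"

definition gen_G_wishart :: "'a set \<Rightarrow> 'a set set \<Rightarrow> ('a \<Rightarrow> nat) \<Rightarrow> (nat \<Rightarrow> nat \<Rightarrow> real) \<Rightarrow> (nat \<Rightarrow> real)
    \<Rightarrow> (nat \<times> nat \<Rightarrow> real) measure" where
  "gen_G_wishart V E \<sigma> U \<delta> =
     density (free_lebesgue V E \<sigma>)
       (\<lambda>x. ennreal (gw_unnorm V E \<sigma> U \<delta> x) /
             (\<integral>\<^sup>+ y. ennreal (gw_unnorm V E \<sigma> U \<delta> y) \<partial>free_lebesgue V E \<sigma>))"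

definition LD_coords :: "'a set \<Rightarrow> 'a set set \<Rightarrow> ('a \<Rightarrow> nat) \<Rightarrow> (nat \<times> nat \<Rightarrow> real) \<Rightarrow> nat \<times> nat \<Rightarrow> real" where
  "LD_coords V E \<sigma> x =
     (let p = card V; \<Omega> = omega_of V E \<sigma> x in
      restrict (\<lambda>(i, j). if j < i then chol_L p \<Omega> i j else Dtilde (chol_D p \<Omega>) i)
               (free_idx V E \<sigma>))"

end

theory Submission
  imports Defs
begin

text \<open>The coordinates \<open>(L\<^sub>I, D\<^sup>~)\<close> are inverted explicitly: the remaining entries of \<open>L\<close> are
  forced, column by column, by the zero pattern of \<open>\<Omega>\<close>, and \<open>D\<^sub>k = D\<^sup>~\<^sub>1 \<cdots> D\<^sup>~\<^sub>k\<close>. Taken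
  column by column, each free entry of \<open>\<Omega> = L D L\<^sup>T\<close> is affine in the corresponding coordinate,
  with slope a pivot depending only on earlier coordinates; so the change of variables is a chain
  of one-dimensional affine substitutions, and the density of \<open>(L\<^sub>I, D\<^sup>~)\<close> is the G-Wishart density
  times the product of the absolute pivots.

  The Generalized Bartlett condition guarantees that in the recursion for a forced entry \<open>L\<^sub>a\<^sub>b\<close>
  every nonzero product \<open>L\<^sub>a\<^sub>m L\<^sub>b\<^sub>m\<close> has a free factor. Hence, as a function of a single
  \<open>L\<^sub>i\<^sub>j\<close>, every entry of \<open>L\<close> is affine, and as a function of a single \<open>D\<^sup>~\<^sub>k\<close> it is of the form
  \<open>\<alpha> + \<beta> / D\<^sup>~\<^sub>k\<close>. Writing \<open>tr(\<Omega> U) = \<Sum>\<^sub>k D\<^sub>k (L e\<^sub>k)\<^sup>T U (L e\<^sub>k)\<close>, the density is therefore the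
  exponential of a quadratic with positive leading coefficient in \<open>L\<^sub>i\<^sub>j\<close>, and a power of \<open>D\<^sup>~\<^sub>k\<close>
  times \<open>exp (- a D\<^sup>~\<^sub>k - b / D\<^sup>~\<^sub>k)\<close> with \<open>a > 0\<close>, \<open>b \<ge> 0\<close>.\<close>

definition unit_lower_tri :: "nat \<Rightarrow> (nat \<Rightarrow> nat \<Rightarrow> real) \<Rightarrow> bool" where
  "unit_lower_tri n L \<longleftrightarrow> (\<forall>i\<in>{1..n}. L i i = 1) \<and> (\<forall>i\<in>{1..n}. \<forall>j\<in>{1..n}. i < j \<longrightarrow> L i j = 0)"

definition quad_form :: "nat \<Rightarrow> (nat \<Rightarrow> nat \<Rightarrow> real) \<Rightarrow> (nat \<Rightarrow> real) \<Rightarrow> real" where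
  "quad_form n A v = (\<Sum>i=1..n. \<Sum>j=1..n. v i * A i j * v j)"

lemma sum_Icc_eq_prefix:
  fixes f :: "nat \<Rightarrow> 'b::comm_monoid_add"
  assumes "m \<le> n" "\<forall>k. m < k \<longrightarrow> f k = 0"
  shows "(\<Sum>k=1..n. f k) = (\<Sum>k=1..m. f k)"
  by (rule sum.mono_neutral_right) (use assms in auto)

lemma sum_Icc_last:
  fixes f :: "nat \<Rightarrow> 'b::comm_monoid_add"
  assumes "b \<ge> 1"
  shows "(\<Sum>k=1..b. f k) = (\<Sum>k\<in>{1..<b}. f k) + f b"
proof -
  have "{1..b} = insert b {1..<b}" using assms by auto
  then show ?thesis by (simp add: add.commute)
qed

lemma unit_lower_tri_mono: "unit_lower_tri n L \<Longrightarrow> c \<le> n \<Longrightarrow> unit_lower_tri c L"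
  unfolding unit_lower_tri_def by auto

lemma quad_form_LDL:
  assumes "\<forall>a\<in>{1..n}. \<forall>b\<in>{1..n}. A a b = (\<Sum>k=1..n. L a k * D k * L b k)"
  shows "quad_form n A v = (\<Sum>k=1..n. D k * (\<Sum>a=1..n. L a k * v a)\<^sup>2)"
proof -
  have "quad_form n A v = (\<Sum>a=1..n. \<Sum>b=1..n. \<Sum>k=1..n. D k * (L a k * v a) * (L b k * v b))"
    using assms by (auto simp: quad_form_def sum_distrib_left sum_distrib_right mult_ac intro!: sum.cong)
  also have "\<dots> = (\<Sum>a=1..n. \<Sum>k=1..n. \<Sum>b=1..n. D k * (L a k * v a) * (L b k * v b))"
    by (rule sum.cong[OF refl], rule sum.swap)
  also have "\<dots> = (\<Sum>k=1..n. \<Sum>a=1..n. \<Sum>b=1..n. D k * (L a k * v a) * (L b k * v b))"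
    by (rule sum.swap)
  also have "\<dots> = (\<Sum>k=1..n. D k * (\<Sum>a=1..n. L a k * v a)\<^sup>2)"
    by (simp add: power2_eq_square sum_product sum_distrib_left mult_ac)
  finally show ?thesis .
qed

lemma unit_lower_tri_transpose_inj:
  assumes "unit_lower_tri n L" and "\<forall>k\<in>{1..n}. (\<Sum>a=1..n. L a k * v a) = 0"
  shows "\<forall>a\<in>{1..n}. v a = 0"
proof (rule ccontr)
  assume "\<not> (\<forall>a\<in>{1..n}. v a = 0)"
  then have S: "finite {a\<in>{1..n}. v a \<noteq> 0}" "{a\<in>{1..n}. v a \<noteq> 0} \<noteq> {}" by auto
  define m where "m = Max {a\<in>{1..n}. v a \<noteq> 0}"
  have m: "m \<in> {1..n}" "v m \<noteq> 0" using Max_in[OF S] by (auto simp: m_def)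
  have above: "v a = 0" if "a \<in> {1..n}" "m < a" for a
    using that by (metis (mono_tags, lifting) Max_ge S(1) leD m_def mem_Collect_eq)
  have "(\<Sum>a=1..n. L a m * v a) = (\<Sum>a\<in>{m}. L a m * v a)"
  proof (rule sum.mono_neutral_right)
    show "\<forall>i\<in>{1..n} - {m}. L i m * v i = 0"
    proof
      fix i assume i: "i \<in> {1..n} - {m}"
      then consider "i < m" | "m < i" by fastforce
      then show "L i m * v i = 0" using assms(1) m above i by cases (auto simp: unit_lower_tri_def)
    qed
  qed (use m in auto)
  also have "\<dots> = v m" using assms(1) m by (simp add: unit_lower_tri_def)
  finally show False using assms(2) m by simp
qed

lemma unit_lower_tri_transpose_solvable:
  assumes "unit_lower_tri n L" "c \<le> n"
  shows "\<exists>v. (\<forall>a. c < a \<or> a = 0 \<longrightarrow> v a = 0) \<and> (\<forall>k\<in>{1..c}. (\<Sum>a=1..c. L a k * v a) = r k)"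
  using assms(2)
proof (induction c arbitrary: r)
  case 0 then show ?case by (intro exI[of _ "\<lambda>_. 0"]) auto
next
  case (Suc c)
  define r' where "r' k = r k - L (Suc c) k * r (Suc c)" for k
  obtain v where v: "\<forall>a. c < a \<or> a = 0 \<longrightarrow> v a = 0" "\<forall>k\<in>{1..c}. (\<Sum>a=1..c. L a k * v a) = r' k"
    using Suc.IH[of r'] Suc.prems by auto
  define v' where "v' = v(Suc c := r (Suc c))"
  have "(\<Sum>a=1..Suc c. L a k * v' a) = r k" if k: "k \<in> {1..Suc c}" for k
  proof -
    have "(\<Sum>a=1..Suc c. L a k * v' a) = (\<Sum>a=1..c. L a k * v a) + L (Suc c) k * r (Suc c)"
      by (simp add: v'_def)
    also have "\<dots> = r k"
    proof (cases "k = Suc c")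
      case True
      then have "(\<Sum>a=1..c. L a k * v a) = 0" "L (Suc c) k = 1"
        using assms(1) Suc.prems by (auto intro!: sum.neutral simp: unit_lower_tri_def)
      then show ?thesis using True by simp
    next
      case False
      then show ?thesis using v(2) k by (simp add: r'_def)
    qed
    finally show ?thesis .
  qed
  moreover have "\<forall>a. Suc c < a \<or> a = 0 \<longrightarrow> v' a = 0" using v(1) by (auto simp: v'_def)
  ultimately show ?case by blast
qed

lemma LDL_quad_form_pos:
  assumes "unit_lower_tri n L" "\<forall>a\<in>{1..n}. \<forall>b\<in>{1..n}. A a b = (\<Sum>k=1..n. L a k * D k * L b k)"
    "\<forall>k\<in>{1..n}. D k > 0" "\<exists>i\<in>{1..n}. v i \<noteq> 0"
  shows "quad_form n A v > 0"
proof -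
  have q: "quad_form n A v = (\<Sum>k=1..n. D k * (\<Sum>a=1..n. L a k * v a)\<^sup>2)"
    by (rule quad_form_LDL[OF assms(2)])
  have nn: "\<forall>k\<in>{1..n}. 0 \<le> D k * (\<Sum>a=1..n. L a k * v a)\<^sup>2"
    using assms(3) by (simp add: less_imp_le)
  have "quad_form n A v \<noteq> 0"
  proof
    assume "quad_form n A v = 0"
    then have "\<forall>k\<in>{1..n}. D k * (\<Sum>a=1..n. L a k * v a)\<^sup>2 = 0"
      using sum_nonneg_eq_0_iff[of "{1..n}" "\<lambda>k. D k * (\<Sum>a=1..n. L a k * v a)\<^sup>2"] q nn by auto
    then have "\<forall>k\<in>{1..n}. (\<Sum>a=1..n. L a k * v a) = 0"
      using assms(3) by force
    then show False using unit_lower_tri_transpose_inj[OF assms(1)] assms(4) by blast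
  qed
  moreover have "quad_form n A v \<ge> 0" unfolding q by (rule sum_nonneg) (use nn in blast)
  ultimately show ?thesis by simp
qed

lemma sym_pd_quad_form_pos: "sym_pd n A \<Longrightarrow> (\<exists>i\<in>{1..n}. v i \<noteq> 0) \<Longrightarrow> quad_form n A v > 0"
  unfolding sym_pd_def quad_form_def by blast

lemma sym_pd_quad_form_nonneg: "sym_pd n A \<Longrightarrow> quad_form n A v \<ge> 0"
  using sym_pd_quad_form_pos[of n A v] by (cases "\<exists>i\<in>{1..n}. v i \<noteq> 0") (auto simp: quad_form_def)

text \<open>A pivot of a positive definite matrix is the value of its quadratic form at the vector
  solving \<open>L\<^sup>T v = e\<^sub>c\<close> on the leading \<open>c \<times> c\<close> block.\<close>
lemma sym_pd_LDL_block_pivot_pos: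
  assumes pd: "sym_pd n A" and L: "unit_lower_tri n L" and c: "c \<in> {1..n}"
    and blk: "\<forall>a\<in>{1..c}. \<forall>b\<in>{1..c}. A a b = (\<Sum>k=1..c. L a k * D k * L b k)"
  shows "D c > 0"
proof -
  obtain v where v: "\<forall>a. c < a \<or> a = 0 \<longrightarrow> v a = 0"
    "\<forall>k\<in>{1..c}. (\<Sum>a=1..c. L a k * v a) = (if k = c then 1 else 0)"
    using unit_lower_tri_transpose_solvable[OF L, of c "\<lambda>k. if k = c then 1 else 0"] c by auto
  have Lc: "unit_lower_tri c L" using unit_lower_tri_mono[OF L] c by auto
  have "(\<Sum>a=1..c. L a c * v a) = (\<Sum>a\<in>{c}. L a c * v a)"
    by (rule sum.mono_neutral_right) (use Lc c in \<open>auto simp: unit_lower_tri_def\<close>)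
  then have vc: "v c = 1" using v(2) c Lc by (auto simp: unit_lower_tri_def)
  have "quad_form n A v = (\<Sum>a=1..c. \<Sum>b=1..n. v a * A a b * v b)"
    unfolding quad_form_def by (rule sum_Icc_eq_prefix) (use c v(1) in auto)
  also have "\<dots> = quad_form c A v"
    unfolding quad_form_def by (intro sum.cong refl sum_Icc_eq_prefix) (use c v(1) in auto)
  also have "\<dots> = (\<Sum>k=1..c. D k * (\<Sum>a=1..c. L a k * v a)\<^sup>2)"
    by (rule quad_form_LDL[OF blk])
  also have "\<dots> = (\<Sum>k=1..c. D k * (if k = c then 1 else 0))"
    using v(2) by (auto intro!: sum.cong)
  also have "\<dots> = D c" using c by (simp add: if_distrib sum.delta' cong: if_cong)
  finally show ?thesis using sym_pd_quad_form_pos[OF pd, of v] vc c by force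
qed

section \<open>The modified Cholesky decomposition\<close>

definition trunc_mat :: "nat \<Rightarrow> (nat \<Rightarrow> nat \<Rightarrow> real) \<Rightarrow> nat \<Rightarrow> nat \<Rightarrow> real" where
  "trunc_mat p L i j = (if i \<in> {1..p} \<and> j \<in> {1..p} then L i j else 0)"

definition trunc_vec :: "nat \<Rightarrow> (nat \<Rightarrow> real) \<Rightarrow> nat \<Rightarrow> real" where
  "trunc_vec p D k = (if k \<in> {1..p} then D k else 0)"

lemma is_mod_chol_truncI:
  assumes "unit_lower_tri p L" "\<forall>k\<in>{1..p}. D k > 0"
    "\<forall>i\<in>{1..p}. \<forall>j\<in>{1..p}. \<Omega> i j = (\<Sum>k=1..p. L i k * D k * L j k)"
  shows "is_mod_chol p \<Omega> (trunc_mat p L) (trunc_vec p D)"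
  using assms by (auto simp: is_mod_chol_def unit_lower_tri_def trunc_mat_def trunc_vec_def intro!: sum.cong)

lemma is_mod_chol_entry:
  assumes "is_mod_chol p \<Omega> L D" "j \<in> {1..p}" "i \<in> {1..p}" "j \<le> i"
  shows "\<Omega> i j = (\<Sum>k\<in>{1..<j}. L i k * D k * L j k) + L i j * D j"
proof -
  have upper: "L j k = 0" if "j < k" for k
    using assms that unfolding is_mod_chol_def by (cases "k \<le> p") auto
  have "\<Omega> i j = (\<Sum>k=1..p. L i k * D k * L j k)" using assms unfolding is_mod_chol_def by blast
  also have "\<dots> = (\<Sum>k=1..j. L i k * D k * L j k)"
    by (rule sum_Icc_eq_prefix) (use assms upper in auto)
  also have "\<dots> = (\<Sum>k\<in>{1..<j}. L i k * D k * L j k) + L i j * D j * L j j"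
    by (rule sum_Icc_last) (use assms in auto)
  finally show ?thesis using assms by (simp add: is_mod_chol_def)
qed

lemma is_mod_chol_unique:
  assumes A: "is_mod_chol p \<Omega> L D" and B: "is_mod_chol p \<Omega> L' D'"
  shows "L = L' \<and> D = D'"
proof -
  have "\<forall>j'. j' \<le> j \<longrightarrow> (\<forall>i. L i j' = L' i j') \<and> D j' = D' j'" for j
  proof (induction j)
    case 0 then show ?case using A B by (auto simp: is_mod_chol_def)
  next
    case (Suc n)
    have "(\<forall>i. L i (Suc n) = L' i (Suc n)) \<and> D (Suc n) = D' (Suc n)"
    proof (cases "Suc n \<le> p")
      case False then show ?thesis using A B by (auto simp: is_mod_chol_def)
    next
      case True
      let ?j = "Suc n"
      have j: "?j \<in> {1..p}" using True by auto
      have IH: "\<And>k i. k \<in> {1..<?j} \<Longrightarrow> L i k = L' i k \<and> D k = D' k" using Suc.IH by auto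
      have dd: "D ?j = D' ?j"
        using is_mod_chol_entry[OF A j j] is_mod_chol_entry[OF B j j] IH j A B
        by (auto simp: is_mod_chol_def intro!: sum.cong)
      have "L i ?j = L' i ?j" for i
      proof (cases "i \<in> {1..p} \<and> ?j \<le> i")
        case False
        then consider "i \<notin> {1..p}" | "i \<in> {1..p}" "i < ?j" by fastforce
        then show ?thesis using A B j by cases (auto simp: is_mod_chol_def)
      next
        case True
        then have i: "i \<in> {1..p}" and ji: "?j \<le> i" by auto
        have "(\<Sum>k\<in>{1..<?j}. L i k * D k * L ?j k) = (\<Sum>k\<in>{1..<?j}. L' i k * D' k * L' ?j k)"
          using IH by (auto intro!: sum.cong)
        then have "L i ?j * D ?j = L' i ?j * D' ?j"
          using is_mod_chol_entry[OF A j i ji] is_mod_chol_entry[OF B j i ji] by simp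
        moreover have "D ?j > 0" using A j by (auto simp: is_mod_chol_def)
        ultimately show ?thesis using dd by simp
      qed
      then show ?thesis using dd by blast
    qed
    then show ?case using Suc.IH le_Suc_eq by auto
  qed
  then show ?thesis by (auto intro!: ext)
qed

lemma chol_LD_eqI:
  assumes "is_mod_chol p \<Omega> L D"
  shows "chol_L p \<Omega> = L" "chol_D p \<Omega> = D"
proof -
  have "(THE (L, D). is_mod_chol p \<Omega> L D) = (L, D)"
    by (rule the_equality) (use assms is_mod_chol_unique in auto)
  then show "chol_L p \<Omega> = L" "chol_D p \<Omega> = D" by (auto simp: chol_L_def chol_D_def)
qed

lemma is_mod_chol_sym_pd:
  assumes "is_mod_chol p \<Omega> L D"
  shows "sym_pd p \<Omega>"
proof -
  have LDL: "\<forall>a\<in>{1..p}. \<forall>b\<in>{1..p}. \<Omega> a b = (\<Sum>k=1..p. L a k * D k * L b k)"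
    using assms by (auto simp: is_mod_chol_def)
  have "quad_form p \<Omega> v > 0" if "\<exists>i\<in>{1..p}. v i \<noteq> 0" for v
    by (rule LDL_quad_form_pos[OF _ LDL _ that]) (use assms in \<open>auto simp: unit_lower_tri_def is_mod_chol_def\<close>)
  moreover have "\<Omega> i j = \<Omega> j i" if "i \<in> {1..p}" "j \<in> {1..p}" for i j
    using LDL that by (auto simp: mult_ac)
  ultimately show ?thesis by (auto simp: sym_pd_def quad_form_def)
qed

lemma chol_THE_not_sym_pd:
  assumes "\<not> sym_pd p \<Omega>"
  shows "(THE (L, D). is_mod_chol p \<Omega> L D) = The (\<lambda>_. False)"
proof -
  have "(\<lambda>(L, D). is_mod_chol p \<Omega> L D) = (\<lambda>_. False)"
    using is_mod_chol_sym_pd assms by (auto intro!: ext)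
  then show ?thesis by simp
qed

text \<open>An explicit form of the factors, in place of the definite description in \<open>chol_L\<close> and
  \<open>chol_D\<close>; it is what makes \<open>LD_coords\<close> measurable.\<close>
function ldl_L :: "(nat \<Rightarrow> nat \<Rightarrow> real) \<Rightarrow> nat \<Rightarrow> nat \<Rightarrow> real"
     and ldl_D :: "(nat \<Rightarrow> nat \<Rightarrow> real) \<Rightarrow> nat \<Rightarrow> real" where
  "ldl_L A i k = (if k = 0 then 0 else if i = k then 1 else if k < i then
      (A i k - (\<Sum>m\<in>{1..<k}. ldl_L A i m * ldl_D A m * ldl_L A k m)) / ldl_D A k else 0)"
| "ldl_D A k = (if k = 0 then 0 else A k k - (\<Sum>m\<in>{1..<k}. ldl_L A k m * ldl_L A k m * ldl_D A m))"
  by pat_completeness auto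
termination
  by (relation "Wellfounded.measure (\<lambda>x. case x of Inl (A, i, k) \<Rightarrow> 2 * k + 2 | Inr (A, k) \<Rightarrow> 2 * k + 1)") auto

declare ldl_L.simps[simp del] ldl_D.simps[simp del]

lemma ldl_L_diag: "k \<ge> 1 \<Longrightarrow> ldl_L A k k = 1" by (subst ldl_L.simps) simp
lemma ldl_L_upper: "i < k \<Longrightarrow> ldl_L A i k = 0" by (subst ldl_L.simps) simp
lemma ldl_L_col0: "ldl_L A i 0 = 0" by (subst ldl_L.simps) simp

lemma unit_lower_tri_ldl_L: "unit_lower_tri n (ldl_L A)"
  by (auto simp: unit_lower_tri_def ldl_L_diag ldl_L_upper)

lemma ldl_entry:
  assumes "1 \<le> b" "b \<le> a" "b < a \<longrightarrow> ldl_D A b \<noteq> 0"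
  shows "A a b = (\<Sum>k=1..b. ldl_L A a k * ldl_D A k * ldl_L A b k)"
proof -
  have "(\<Sum>k=1..b. ldl_L A a k * ldl_D A k * ldl_L A b k) =
      (\<Sum>k\<in>{1..<b}. ldl_L A a k * ldl_D A k * ldl_L A b k) + ldl_L A a b * ldl_D A b"
    using sum_Icc_last[of b "\<lambda>k. ldl_L A a k * ldl_D A k * ldl_L A b k"] assms by (simp add: ldl_L_diag)
  also have "\<dots> = A a b"
  proof (cases "a = b")
    case True then show ?thesis using assms by (subst (2) ldl_D.simps) (simp add: ldl_L_diag mult_ac)
  next
    case False then show ?thesis using assms by (subst (2) ldl_L.simps) simp
  qed
  finally show ?thesis by simp
qed

lemma ldl_leading_block:
  assumes sym: "\<forall>a\<in>{1..p}. \<forall>b\<in>{1..p}. A a b = A b a"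
    and nz: "\<forall>k\<in>{1..<c}. ldl_D A k \<noteq> 0" and c: "c \<le> p"
  shows "\<forall>a\<in>{1..c}. \<forall>b\<in>{1..c}. A a b = (\<Sum>k=1..c. ldl_L A a k * ldl_D A k * ldl_L A b k)"
proof (intro ballI)
  have lower: "A a b = (\<Sum>k=1..c. ldl_L A a k * ldl_D A k * ldl_L A b k)"
    if "a \<in> {1..c}" "b \<in> {1..c}" "b \<le> a" for a b
  proof -
    have "A a b = (\<Sum>k=1..b. ldl_L A a k * ldl_D A k * ldl_L A b k)"
      by (rule ldl_entry) (use that nz in auto)
    also have "\<dots> = (\<Sum>k=1..c. ldl_L A a k * ldl_D A k * ldl_L A b k)"
      by (rule sum_Icc_eq_prefix[symmetric]) (use that in \<open>auto simp: ldl_L_upper\<close>)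
    finally show ?thesis .
  qed
  fix a b assume a: "a \<in> {1..c}" and b: "b \<in> {1..c}"
  show "A a b = (\<Sum>k=1..c. ldl_L A a k * ldl_D A k * ldl_L A b k)"
  proof (cases "b \<le> a")
    case True then show ?thesis using lower a b by blast
  next
    case False
    then show ?thesis using lower[OF b a] sym a b c by (auto simp: mult_ac)
  qed
qed

lemma sym_pd_ldl_D_pos:
  assumes "sym_pd p A"
  shows "\<forall>k\<in>{1..p}. ldl_D A k > 0"
proof -
  have sym: "\<forall>a\<in>{1..p}. \<forall>b\<in>{1..p}. A a b = A b a" using assms by (auto simp: sym_pd_def)
  have "c \<le> p \<longrightarrow> (\<forall>k\<in>{1..c}. ldl_D A k > 0)" for c
  proof (induction c)
    case (Suc c)
    show ?case
    proof
      assume c: "Suc c \<le> p"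
      then have IH: "\<forall>k\<in>{1..c}. ldl_D A k > 0" using Suc by simp
      have "ldl_D A (Suc c) > 0"
      proof (rule sym_pd_LDL_block_pivot_pos[OF assms unit_lower_tri_ldl_L])
        show "\<forall>a\<in>{1..Suc c}. \<forall>b\<in>{1..Suc c}. A a b = (\<Sum>k=1..Suc c. ldl_L A a k * ldl_D A k * ldl_L A b k)"
          by (rule ldl_leading_block[OF sym _ c]) (use IH in \<open>force simp: less_Suc_eq_le\<close>)
      qed (use c in auto)
      then show "\<forall>k\<in>{1..Suc c}. ldl_D A k > 0" using IH le_Suc_eq by auto
    qed
  qed simp
  then show ?thesis by blast
qed

lemma is_mod_chol_ldl:
  assumes sym: "\<forall>a\<in>{1..p}. \<forall>b\<in>{1..p}. A a b = A b a" and pos: "\<forall>k\<in>{1..p}. ldl_D A k > 0"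
  shows "is_mod_chol p A (trunc_mat p (ldl_L A)) (trunc_vec p (ldl_D A))"
proof (rule is_mod_chol_truncI[OF unit_lower_tri_ldl_L pos])
  show "\<forall>a\<in>{1..p}. \<forall>b\<in>{1..p}. A a b = (\<Sum>k=1..p. ldl_L A a k * ldl_D A k * ldl_L A b k)"
    by (rule ldl_leading_block[OF sym _ order.refl]) (use pos in \<open>force simp: less_imp_le\<close>)
qed

lemma sym_pd_iff_ldl_D_pos:
  assumes "\<forall>a\<in>{1..p}. \<forall>b\<in>{1..p}. A a b = A b a"
  shows "sym_pd p A \<longleftrightarrow> (\<forall>k\<in>{1..p}. ldl_D A k > 0)"
  using sym_pd_ldl_D_pos is_mod_chol_ldl[OF assms] is_mod_chol_sym_pd by blast

lemma chol_LD_sym_pd: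
  assumes "sym_pd p A"
  shows "chol_L p A = trunc_mat p (ldl_L A)" "chol_D p A = trunc_vec p (ldl_D A)"
  using chol_LD_eqI[OF is_mod_chol_ldl[OF _ sym_pd_ldl_D_pos[OF assms]]] assms
  by (auto simp: sym_pd_def)

section \<open>Triangular affine changes of variables in \<open>\<real>\<^sup>I\<close>\<close>

lemma product_sigma_finite_lborel: "product_sigma_finite (\<lambda>_::'i. lborel :: real measure)"
  by (simp add: product_sigma_finite_def sigma_finite_lborel)

lemma measurable_PiM_lborel_coord: "(\<lambda>z. z c) \<in> borel_measurable (PiM I (\<lambda>_. lborel :: real measure))"
proof (cases "c \<in> I")
  case True
  then show ?thesis using measurable_component_singleton[OF True, of "\<lambda>_. lborel"] by simp
next
  case False
  then have "(\<lambda>z. z c) \<in> borel_measurable (PiM I (\<lambda>_. lborel :: real measure)) \<longleftrightarrow>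
        (\<lambda>z. undefined :: real) \<in> borel_measurable (PiM I (\<lambda>_. lborel :: real measure))"
    by (intro measurable_cong) (auto simp: space_PiM PiE_def extensional_def)
  then show ?thesis by simp
qed

lemma AE_PiM_lborel_coord_neq:
  assumes "finite I" "c \<in> I"
  shows "AE z in PiM I (\<lambda>_. lborel). z c \<noteq> (a::real)"
proof -
  interpret product_sigma_finite "\<lambda>_::'i. lborel :: real measure" by (rule product_sigma_finite_lborel)
  let ?M = "PiM I (\<lambda>_. lborel :: real measure)" and ?N = "PiM (I - {c}) (\<lambda>_. lborel :: real measure)"
  have I: "I = insert c (I - {c})" using assms by auto
  have m: "(\<lambda>z. indicator {z. z c = a} z :: ennreal) \<in> borel_measurable ?M"
  proof -
    have "{z \<in> space ?M. z c = a} \<in> sets ?M" using assms by measurable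
    moreover have "{z. z c = a} \<inter> space ?M = {z \<in> space ?M. z c = a}" by auto
    ultimately show ?thesis by (simp add: borel_measurable_indicator_iff)
  qed
  have "(\<integral>\<^sup>+z. indicator {z. z c = a} z \<partial>?M) =
      (\<integral>\<^sup>+x. (\<integral>\<^sup>+t. indicator {z. z c = a} (x(c := t)) \<partial>lborel) \<partial>?N)"
    by (subst I, rule product_nn_integral_insert) (use assms m in \<open>auto simp: I[symmetric]\<close>)
  also have "\<dots> = (\<integral>\<^sup>+x. (\<integral>\<^sup>+t. indicator {a} t \<partial>lborel) \<partial>?N)"
    by (intro nn_integral_cong) (simp add: indicator_def)
  also have "\<dots> = 0" by simp
  finally have "AE z in ?M. indicator {z. z c = a} z = (0::ennreal)"
    using nn_integral_0_iff_AE[OF m] by simp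
  then show ?thesis by eventually_elim (auto simp: indicator_def split: if_splits)
qed

lemma nn_integral_PiM_lborel_affine_coord:
  fixes G :: "('i \<Rightarrow> real) \<Rightarrow> ennreal" and \<alpha> \<beta> :: "('i \<Rightarrow> real) \<Rightarrow> real"
  assumes I: "finite I" "c \<in> I"
   and G[measurable]: "G \<in> borel_measurable (PiM I (\<lambda>_. lborel))"
   and \<alpha>[measurable]: "\<alpha> \<in> borel_measurable (PiM I (\<lambda>_. lborel))"
   and \<beta>[measurable]: "\<beta> \<in> borel_measurable (PiM I (\<lambda>_. lborel))"
   and \<alpha>_indep: "\<And>y t. y \<in> space (PiM I (\<lambda>_. lborel)) \<Longrightarrow> \<alpha> (y(c := t)) = \<alpha> y"
   and \<beta>_indep: "\<And>y t. y \<in> space (PiM I (\<lambda>_. lborel)) \<Longrightarrow> \<beta> (y(c := t)) = \<beta> y"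
   and \<beta>_nz: "\<And>y. \<beta> y \<noteq> 0"
  shows "(\<integral>\<^sup>+y. G y \<partial>PiM I (\<lambda>_. lborel)) =
         (\<integral>\<^sup>+y. G (y(c := \<alpha> y + \<beta> y * y c)) * ennreal \<bar>\<beta> y\<bar> \<partial>PiM I (\<lambda>_. lborel))"
proof -
  interpret product_sigma_finite "\<lambda>_::'i. lborel :: real measure" by (rule product_sigma_finite_lborel)
  let ?M = "PiM I (\<lambda>_. lborel :: real measure)" and ?N = "PiM (I - {c}) (\<lambda>_. lborel :: real measure)"
  have IJ: "I = insert c (I - {c})" "c \<notin> I - {c}" "finite (I - {c})" using I by auto
  define H where "H y = G (y(c := \<alpha> y + \<beta> y * y c)) * ennreal \<bar>\<beta> y\<bar>" for y
  have [measurable]: "(\<lambda>y. y(c := \<alpha> y + \<beta> y * y c)) \<in> measurable ?M ?M"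
    by (rule measurable_fun_upd[where J=I]) (use I in auto)
  have H[measurable]: "H \<in> borel_measurable ?M" unfolding H_def by measurable
  have fubini: "(\<integral>\<^sup>+y. F y \<partial>?M) = (\<integral>\<^sup>+x. (\<integral>\<^sup>+t. F (x(c := t)) \<partial>lborel) \<partial>?N)"
    if "F \<in> borel_measurable ?M" for F
    by (subst IJ(1), rule product_nn_integral_insert) (use IJ that in auto)
  have inner: "(\<integral>\<^sup>+t. G (x(c := t)) \<partial>lborel) = (\<integral>\<^sup>+t. H (x(c := t)) \<partial>lborel)"
    if x: "x \<in> space ?N" for x
  proof -
    define x0 where "x0 = x(c := 0)"
    have x0: "x0 \<in> space ?M"
      using x IJ by (auto simp: x0_def space_PiM PiE_def extensional_def)
    have "x(c := t) = x0(c := t)" for t by (simp add: x0_def)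
    then have coeff: "\<alpha> (x(c := t)) = \<alpha> x0" "\<beta> (x(c := t)) = \<beta> x0" for t
      using \<alpha>_indep[OF x0] \<beta>_indep[OF x0] by auto
    have upd: "(\<lambda>t. x(c := t)) \<in> measurable lborel ?M"
      using measurable_component_update[OF x IJ(2)] IJ(1) by simp
    have "(\<integral>\<^sup>+t. G (x(c := t)) \<partial>lborel) = \<bar>\<beta> x0\<bar> * (\<integral>\<^sup>+t. G (x(c := \<alpha> x0 + \<beta> x0 * t)) \<partial>lborel)"
      by (rule nn_integral_real_affine[OF _ \<beta>_nz]) (use upd in measurable)
    also have "\<dots> = (\<integral>\<^sup>+t. G (x(c := \<alpha> x0 + \<beta> x0 * t)) * ennreal \<bar>\<beta> x0\<bar> \<partial>lborel)"
      by (subst nn_integral_multc) (use upd in \<open>measurable, simp add: mult.commute\<close>)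
    also have "\<dots> = (\<integral>\<^sup>+t. H (x(c := t)) \<partial>lborel)"
      by (rule nn_integral_cong) (simp add: H_def coeff)
    finally show ?thesis .
  qed
  show ?thesis
    unfolding H_def[symmetric] fubini[OF G] fubini[OF H] by (rule nn_integral_cong) (use inner in simp)
qed

definition affine_chain :: "'i set \<Rightarrow> ('i \<Rightarrow> nat) \<Rightarrow> nat \<Rightarrow> (('i \<Rightarrow> real) \<Rightarrow> 'i \<Rightarrow> real)
    \<Rightarrow> (('i \<Rightarrow> real) \<Rightarrow> 'i \<Rightarrow> real) \<Rightarrow> ('i \<Rightarrow> real) \<Rightarrow> 'i \<Rightarrow> real" where
  "affine_chain I rk r al be z = (\<lambda>c. if c \<in> I \<and> rk c < r then al z c + be z c * z c else z c)"

definition affine_chain_jac :: "'i set \<Rightarrow> ('i \<Rightarrow> nat) \<Rightarrow> nat \<Rightarrow> (('i \<Rightarrow> real) \<Rightarrow> 'i \<Rightarrow> real)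
    \<Rightarrow> ('i \<Rightarrow> real) \<Rightarrow> real" where
  "affine_chain_jac I rk r be z = (\<Prod>c\<in>{c\<in>I. rk c < r}. \<bar>be z c\<bar>)"

text \<open>If the coefficients of coordinate \<open>c\<close> depend only on coordinates of smaller rank, the
  substitutions can be carried out one at a time, each by Fubini's theorem and a one-dimensional
  affine change of variables.\<close>
locale affine_chain_data =
  fixes I :: "'i set" and rk :: "'i \<Rightarrow> nat" and al be :: "('i \<Rightarrow> real) \<Rightarrow> 'i \<Rightarrow> real"
  assumes finite: "finite I" and rk_inj: "inj_on rk I"
   and al_measurable: "\<And>c. c \<in> I \<Longrightarrow> (\<lambda>z. al z c) \<in> borel_measurable (PiM I (\<lambda>_. lborel))"
   and be_measurable: "\<And>c. c \<in> I \<Longrightarrow> (\<lambda>z. be z c) \<in> borel_measurable (PiM I (\<lambda>_. lborel))"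
   and al_indep: "\<And>c d y t. c \<in> I \<Longrightarrow> d \<in> I \<Longrightarrow> rk c \<le> rk d \<Longrightarrow> y \<in> space (PiM I (\<lambda>_. lborel)) \<Longrightarrow>
      al (y(d := t)) c = al y c"
   and be_indep: "\<And>c d y t. c \<in> I \<Longrightarrow> d \<in> I \<Longrightarrow> rk c \<le> rk d \<Longrightarrow> y \<in> space (PiM I (\<lambda>_. lborel)) \<Longrightarrow>
      be (y(d := t)) c = be y c"
   and be_nz: "\<And>z c. be z c \<noteq> 0"
begin

abbreviation "Leb \<equiv> PiM I (\<lambda>_. lborel :: real measure)"

lemma measurable_affine_chain: "affine_chain I rk r al be \<in> measurable Leb Leb"
proof (rule measurable_PiM_single'[where f="\<lambda>c z. affine_chain I rk r al be z c"])
  fix c assume c: "c \<in> I"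
  show "(\<lambda>z. affine_chain I rk r al be z c) \<in> measurable Leb lborel"
    unfolding affine_chain_def measurable_lborel1 using al_measurable[OF c] be_measurable[OF c] c
    by measurable
qed (auto simp: affine_chain_def space_PiM PiE_def extensional_def)

lemma borel_measurable_affine_chain_jac: "affine_chain_jac I rk r be \<in> borel_measurable Leb"
  unfolding affine_chain_jac_def
  by (rule borel_measurable_prod) (use be_measurable in measurable)

lemma affine_chain_Suc:
  assumes c: "c \<in> I" "rk c = r" and y: "y \<in> space Leb"
  defines "y' \<equiv> y(c := al y c + be y c * y c)"
  shows "affine_chain I rk r al be y' = affine_chain I rk (Suc r) al be y"
    and "affine_chain_jac I rk (Suc r) be y = \<bar>be y c\<bar> * affine_chain_jac I rk r be y'"
proof -
  have rk_Suc: "{d\<in>I. rk d < Suc r} = insert c {d\<in>I. rk d < r}"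
    using c rk_inj by (auto simp: less_Suc_eq inj_on_def)
  show "affine_chain I rk r al be y' = affine_chain I rk (Suc r) al be y"
  proof
    fix d
    consider "d \<in> I" "rk d < r" | "d = c" | "\<not> (d \<in> I \<and> rk d < Suc r)"
      using rk_Suc by blast
    then show "affine_chain I rk r al be y' d = affine_chain I rk (Suc r) al be y d"
    proof cases
      case 1
      then show ?thesis using al_indep[of d c y] be_indep[of d c y] c y
        by (auto simp: affine_chain_def y'_def)
    qed (use c in \<open>auto simp: affine_chain_def y'_def\<close>)
  qed
  have "affine_chain_jac I rk r be y' = affine_chain_jac I rk r be y"
    unfolding affine_chain_jac_def y'_def
    by (rule prod.cong[OF refl]) (use be_indep c y in \<open>auto intro!: arg_cong[where f=abs]\<close>)
  then show "affine_chain_jac I rk (Suc r) be y = \<bar>be y c\<bar> * affine_chain_jac I rk r be y'"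
    using finite c by (simp add: affine_chain_jac_def rk_Suc)
qed

lemma nn_integral_affine_chain:
  assumes F[measurable]: "F \<in> borel_measurable Leb"
  shows "(\<integral>\<^sup>+z. F z \<partial>Leb) = (\<integral>\<^sup>+z. F (affine_chain I rk r al be z) * ennreal (affine_chain_jac I rk r be z) \<partial>Leb)"
proof (induction r)
  case 0
  have "affine_chain I rk 0 al be z = z" for z by (auto simp: affine_chain_def)
  then show ?case by (simp add: affine_chain_jac_def)
next
  case (Suc r)
  show ?case
  proof (cases "\<exists>c\<in>I. rk c = r")
    case False
    then have "{c\<in>I. rk c < Suc r} = {c\<in>I. rk c < r}"
      "affine_chain I rk (Suc r) al be = affine_chain I rk r al be"
      by (auto simp: affine_chain_def less_Suc_eq intro!: ext)
    then show ?thesis using Suc.IH by (simp add: affine_chain_jac_def)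
  next
    case True
    then obtain c where c: "c \<in> I" "rk c = r" by blast
    define G where "G z = F (affine_chain I rk r al be z) * ennreal (affine_chain_jac I rk r be z)" for z
    have "G \<in> borel_measurable Leb" unfolding G_def
      using measurable_compose[OF measurable_affine_chain F] borel_measurable_affine_chain_jac
      by measurable
    then have "(\<integral>\<^sup>+z. G z \<partial>Leb) = (\<integral>\<^sup>+y. G (y(c := al y c + be y c * y c)) * ennreal \<bar>be y c\<bar> \<partial>Leb)"
      by (rule nn_integral_PiM_lborel_affine_coord[OF finite c(1) _ al_measurable[OF c(1)] be_measurable[OF c(1)]])
         (use al_indep[OF c(1) c(1)] be_indep[OF c(1) c(1)] be_nz in auto)
    also have "\<dots> = (\<integral>\<^sup>+y. F (affine_chain I rk (Suc r) al be y) * ennreal (affine_chain_jac I rk (Suc r) be y) \<partial>Leb)"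
    proof (rule nn_integral_cong)
      fix y assume y: "y \<in> space Leb"
      have "affine_chain_jac I rk r be (y(c := al y c + be y c * y c)) \<ge> 0"
        by (simp add: affine_chain_jac_def prod_nonneg)
      then show "G (y(c := al y c + be y c * y c)) * ennreal \<bar>be y c\<bar> =
          F (affine_chain I rk (Suc r) al be y) * ennreal (affine_chain_jac I rk (Suc r) be y)"
        unfolding G_def affine_chain_Suc[OF c y] by (simp add: ennreal_mult' mult_ac)
    qed
    finally show ?thesis unfolding Suc.IH G_def .
  qed
qed

end

definition par_D :: "(nat \<times> nat \<Rightarrow> real) \<Rightarrow> nat \<Rightarrow> real" where
  "par_D z k = (\<Prod>l=1..k. z (l, l))"

text \<open>The unit lower triangular \<open>L\<close> with free entries \<open>z (i, k)\<close> for edges \<open>ed i k\<close>, and all other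
  entries forced by \<open>(L D L\<^sup>T)\<^sub>i\<^sub>k = 0\<close>, where \<open>D = par_D z\<close>.\<close>
function par_L :: "(nat \<Rightarrow> nat \<Rightarrow> bool) \<Rightarrow> (nat \<times> nat \<Rightarrow> real) \<Rightarrow> nat \<Rightarrow> nat \<Rightarrow> real" where
  "par_L ed z i k = (if k = 0 then 0 else if i = k then 1 else if k < i then
      (if ed i k then z (i, k) else - (\<Sum>m\<in>{1..<k}. par_L ed z i m * par_D z m * par_L ed z k m) / par_D z k)
    else 0)"
  by pat_completeness auto
termination
  by (relation "Wellfounded.measure (\<lambda>(ed, z, i, k). k)") auto

declare par_L.simps[simp del]

lemma par_D_Suc: "par_D z (Suc k) = par_D z k * z (Suc k, Suc k)"
  by (simp add: par_D_def prod.nat_ivl_Suc' mult.commute)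

lemma par_D_nz: "\<forall>l\<in>{1..p}. z (l, l) \<noteq> 0 \<Longrightarrow> k \<le> p \<Longrightarrow> par_D z k \<noteq> 0"
  by (simp add: par_D_def prod_zero_iff)

lemma par_D_pos: "\<forall>l\<in>{1..p}. z (l, l) > 0 \<Longrightarrow> k \<le> p \<Longrightarrow> par_D z k > 0"
  unfolding par_D_def by (rule prod_pos) auto

lemma par_L_diag: "k \<ge> 1 \<Longrightarrow> par_L ed z k k = 1" by (subst par_L.simps) simp
lemma par_L_upper: "i < k \<Longrightarrow> par_L ed z i k = 0" by (subst par_L.simps) simp
lemma par_L_col0: "par_L ed z i 0 = 0" by (subst par_L.simps) simp
lemma par_L_edge: "1 \<le> k \<Longrightarrow> k < i \<Longrightarrow> ed i k \<Longrightarrow> par_L ed z i k = z (i, k)"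
  by (subst par_L.simps) simp
lemma par_L_nonedge: "1 \<le> k \<Longrightarrow> k < i \<Longrightarrow> \<not> ed i k \<Longrightarrow>
   par_L ed z i k = - (\<Sum>m\<in>{1..<k}. par_L ed z i m * par_D z m * par_L ed z k m) / par_D z k"
  by (subst par_L.simps) simp

lemma par_L_trivial: "b = 0 \<or> a \<le> b \<Longrightarrow> par_L ed z a b = (if b \<noteq> 0 \<and> a = b then 1 else 0)"
  by (auto simp: par_L_col0 par_L_diag par_L_upper)

lemma unit_lower_tri_par_L: "unit_lower_tri n (par_L ed z)"
  by (auto simp: unit_lower_tri_def par_L_diag par_L_upper)

lemma par_D_cong: "\<forall>l. 1 \<le> l \<and> l \<le> k \<longrightarrow> z (l, l) = z' (l, l) \<Longrightarrow> par_D z k = par_D z' k"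
  by (simp add: par_D_def)

lemma par_L_cong:
  assumes "\<forall>i l. 1 \<le> l \<and> l \<le> j \<longrightarrow> z (i, l) = z' (i, l)"
  shows "k \<le> j \<Longrightarrow> par_L ed z i k = par_L ed z' i k"
proof (induction k arbitrary: i rule: less_induct)
  case (less k)
  have D: "par_D z m = par_D z' m" if "m \<le> k" for m
    unfolding par_D_def using assms less.prems that by (intro prod.cong refl) force
  have IH: "par_L ed z i m = par_L ed z' i m" if "m \<in> {1..<k}" for m i using less that by auto
  show ?case
    using IH D assms less.prems
    by (subst (1 2) par_L.simps) (auto intro!: sum.cong arg_cong2[where f="(/)"])
qed

lemma par_L_cong_col:
  assumes "\<forall>i l. 1 \<le> l \<and> l < k \<longrightarrow> z (i, l) = z' (i, l)"
    and "z (b, k) = z' (b, k)" and "z (k, k) = z' (k, k)"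
  shows "par_L ed z b k = par_L ed z' b k"
proof -
  have IH: "par_L ed z i m = par_L ed z' i m" if "m \<in> {1..<k}" for m i
    by (rule par_L_cong[where j="k - 1"]) (use assms that in auto)
  have diag: "z (l, l) = z' (l, l)" if "1 \<le> l" "l \<le> k" for l
    using assms that by (cases "l = k") auto
  have D: "par_D z m = par_D z' m" if "m \<le> k" for m
    unfolding par_D_def using diag that by (intro prod.cong refl) auto
  show ?thesis
    using IH D assms by (subst (1 2) par_L.simps) (auto intro!: sum.cong arg_cong2[where f="(/)"])
qed

lemma borel_measurable_par_D:
  "(\<And>c. (\<lambda>x. f x c) \<in> borel_measurable M) \<Longrightarrow> (\<lambda>x. par_D (f x) k) \<in> borel_measurable M"
  unfolding par_D_def by (rule borel_measurable_prod) auto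

lemma borel_measurable_par_L:
  assumes f: "\<And>c. (\<lambda>x. f x c) \<in> borel_measurable M"
  shows "(\<lambda>x. par_L ed (f x) i k) \<in> borel_measurable M"
proof (induction k arbitrary: i rule: less_induct)
  case (less k)
  have sum: "(\<lambda>x. \<Sum>m\<in>{1..<k}. par_L ed (f x) i m * par_D (f x) m * par_L ed (f x) k m) \<in> borel_measurable M"
  proof (rule borel_measurable_sum)
    fix m assume "m \<in> {1..<k}"
    then have "(\<lambda>x. par_L ed (f x) i m) \<in> borel_measurable M" "(\<lambda>x. par_L ed (f x) k m) \<in> borel_measurable M"
      using less.IH by auto
    then show "(\<lambda>x. par_L ed (f x) i m * par_D (f x) m * par_L ed (f x) k m) \<in> borel_measurable M"
      using borel_measurable_par_D[OF f, where k=m] by measurable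
  qed
  show ?case
    by (subst par_L.simps) (use f sum borel_measurable_par_D[OF f, where k=k] in measurable)
qed

lemma borel_measurable_ldl:
  assumes A: "\<And>a b. (\<lambda>x. A x a b) \<in> borel_measurable M"
  shows "(\<forall>i. (\<lambda>x. ldl_L (A x) i k) \<in> borel_measurable M) \<and> (\<lambda>x. ldl_D (A x) k) \<in> borel_measurable M"
proof (induction k rule: less_induct)
  case (less k)
  have IHL: "\<And>m i. m < k \<Longrightarrow> (\<lambda>x. ldl_L (A x) i m) \<in> borel_measurable M"
   and IHD: "\<And>m. m < k \<Longrightarrow> (\<lambda>x. ldl_D (A x) m) \<in> borel_measurable M" using less by blast+
  have sum: "(\<lambda>x. \<Sum>m\<in>{1..<k}. ldl_L (A x) i m * ldl_D (A x) m * ldl_L (A x) j m) \<in> borel_measurable M"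
    for i j by (rule borel_measurable_sum) (use IHL IHD in auto)
  have sumD: "(\<lambda>x. \<Sum>m\<in>{1..<k}. ldl_L (A x) k m * ldl_L (A x) k m * ldl_D (A x) m) \<in> borel_measurable M"
    by (rule borel_measurable_sum) (use IHL IHD in auto)
  have D_eq: "(\<lambda>x. ldl_D (A x) k) = (\<lambda>x. if k = 0 then 0 else
      A x k k - (\<Sum>m\<in>{1..<k}. ldl_L (A x) k m * ldl_L (A x) k m * ldl_D (A x) m))"
    by (subst ldl_D.simps) (rule refl)
  have D: "(\<lambda>x. ldl_D (A x) k) \<in> borel_measurable M"
    unfolding D_eq using sumD A by measurable
  have "(\<lambda>x. ldl_L (A x) i k) \<in> borel_measurable M" for i
  proof (cases "k \<noteq> 0 \<and> k < i")
    case True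
    then show ?thesis using sum[of i k] A D by (subst ldl_L.simps) (simp, measurable)
  next
    case False
    then have "(\<lambda>x. ldl_L (A x) i k) = (\<lambda>x. if k = 0 then 0 else if i = k then 1 else 0)"
      by (auto simp: ldl_L_col0 ldl_L_diag ldl_L_upper)
    then show ?thesis by simp
  qed
  then show ?case using D by blast
qed

section \<open>Fill-in and the Generalized Bartlett property\<close>

locale ordered_graph =
  fixes V :: "'a set" and E :: "'a set set" and \<sigma> :: "'a \<Rightarrow> nat" and p :: nat
  assumes card_V: "card V = p" and ordering: "is_ordering V \<sigma>"
begin

abbreviation "vtx \<equiv> inv_into V \<sigma>"
abbreviation "ed \<equiv> ord_edge V E \<sigma>"
abbreviation "I \<equiv> free_idx V E \<sigma>"

lemma bij: "bij_betw \<sigma> V {1..p}"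
  using ordering card_V by (simp add: is_ordering_def)

lemma vtx_in: "i \<in> {1..p} \<Longrightarrow> vtx i \<in> V"
  using bij_betw_apply[OF bij_betw_inv_into[OF bij]] by blast

lemma sigma_vtx: "i \<in> {1..p} \<Longrightarrow> \<sigma> (vtx i) = i"
  using bij by (metis bij_betw_imp_surj_on f_inv_into_f)

lemma free_idx_iff: "(i, j) \<in> I \<longleftrightarrow> i \<in> {1..p} \<and> j \<in> {1..p} \<and> j \<le> i \<and> (i = j \<or> ed i j)"
  using card_V by (simp add: free_idx_def)

lemma finite_free_idx: "finite I"
  by (rule finite_subset[of _ "{1..p} \<times> {1..p}"]) (auto simp: free_idx_iff)

lemma fill_edges_mono: "i \<le> j \<Longrightarrow> fill_edges V E \<sigma> i \<subseteq> fill_edges V E \<sigma> j"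
proof (induction j)
  case (Suc j) then show ?case by (cases "i = Suc j") auto
qed simp

lemma fill_edges_step:
  assumes "1 \<le> m" "m < a" "m < b" "a \<le> p" "b \<le> p" "a \<noteq> b"
    and "{vtx a, vtx m} \<in> fill_edges V E \<sigma> (m - 1)" "{vtx b, vtx m} \<in> fill_edges V E \<sigma> (m - 1)"
  shows "{vtx a, vtx b} \<in> fill_edges V E \<sigma> m"
proof -
  have m: "Suc (m - 1) = m" using assms by auto
  have "vtx a \<noteq> vtx b" using sigma_vtx[of a] sigma_vtx[of b] assms by auto
  moreover have "vtx a \<in> V" "vtx b \<in> V" "\<sigma> (vtx a) > Suc (m - 1)" "\<sigma> (vtx b) > Suc (m - 1)"
    using vtx_in sigma_vtx assms m by auto
  moreover have "{vtx a, vtx (Suc (m - 1))} \<in> fill_edges V E \<sigma> (m - 1)"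
    "{vtx b, vtx (Suc (m - 1))} \<in> fill_edges V E \<sigma> (m - 1)"
    using assms(7,8) m by simp_all
  ultimately have "{vtx a, vtx b} \<in> fill_edges V E \<sigma> (Suc (m - 1))"
    by (subst fill_edges.simps) blast
  then show ?thesis using m by simp
qed

lemma par_L_nonzero_fill_edge:
  assumes "1 \<le> b" "b < a" "a \<le> p" "par_L ed z a b \<noteq> 0"
  shows "{vtx a, vtx b} \<in> fill_edges V E \<sigma> (b - 1)"
  using assms
proof (induction b arbitrary: a rule: less_induct)
  case (less b)
  show ?case
  proof (cases "ed a b")
    case True
    then show ?thesis using fill_edges_mono[of 0 "b - 1"] by (auto simp: ord_edge_def)
  next
    case False
    then have "(\<Sum>m\<in>{1..<b}. par_L ed z a m * par_D z m * par_L ed z b m) \<noteq> 0"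
      using less.prems par_L_nonedge[of b a ed z] by auto
    then obtain m where m: "m \<in> {1..<b}" "par_L ed z a m * par_D z m * par_L ed z b m \<noteq> 0"
      by (meson sum.neutral)
    have "{vtx a, vtx m} \<in> fill_edges V E \<sigma> (m - 1)" "{vtx b, vtx m} \<in> fill_edges V E \<sigma> (m - 1)"
      by (rule less.IH; use m less.prems in auto)+
    then have "{vtx a, vtx b} \<in> fill_edges V E \<sigma> m"
      by (rule fill_edges_step[rotated 6]) (use m less.prems in auto)
    moreover have "m \<le> b - 1" using m by auto
    ultimately show ?thesis using fill_edges_mono[of m "b - 1"] by auto
  qed
qed

end

locale GB_ordered = ordered_graph +
  assumes GB: "GB_ordering V E \<sigma>"
begin

lemma GB_no_triangle:
  assumes "{u, v} \<in> triangulation V E \<sigma>" "{v, w} \<in> triangulation V E \<sigma>" "{u, w} \<in> triangulation V E \<sigma>"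
    "{u, v} \<notin> E" "{v, w} \<notin> E" "{u, w} \<notin> E"
  shows False
proof -
  have "\<exists>u v w. {u, v} \<notin> E \<and> {v, w} \<notin> E \<and> {u, w} \<notin> E \<and>
      {u, v} \<in> triangulation V E \<sigma> \<and> {v, w} \<in> triangulation V E \<sigma> \<and> {u, w} \<in> triangulation V E \<sigma>"
    by (intro exI[of _ u] exI[of _ v] exI[of _ w] conjI assms)
  then show False using GB by (simp add: GB_ordering_def)
qed

text \<open>This is where the Generalized Bartlett property enters: in the recursion for a
  non-free entry \<open>L\<^sub>a\<^sub>b\<close>, every nonvanishing product \<open>L\<^sub>a\<^sub>m L\<^sub>b\<^sub>m\<close> has a free factor.\<close>
lemma GB_product_has_free_factor:
  assumes "1 \<le> m" "m < b" "b < a" "a \<le> p" "\<not> ed a b"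
    and "par_L ed z1 a m \<noteq> 0" "par_L ed z2 b m \<noteq> 0"
  shows "ed a m \<or> ed b m"
proof (rule ccontr)
  assume nonfree: "\<not> (ed a m \<or> ed b m)"
  have fa: "{vtx a, vtx m} \<in> fill_edges V E \<sigma> (m - 1)"
    by (rule par_L_nonzero_fill_edge) (use assms in auto)
  have fb: "{vtx b, vtx m} \<in> fill_edges V E \<sigma> (m - 1)"
    by (rule par_L_nonzero_fill_edge) (use assms in auto)
  have fab: "{vtx a, vtx b} \<in> fill_edges V E \<sigma> m"
    by (rule fill_edges_step[OF _ _ _ _ _ _ fa fb]) (use assms in auto)
  have tri: "fill_edges V E \<sigma> i \<subseteq> triangulation V E \<sigma>" if "i \<le> p - 2" for i
    using fill_edges_mono[OF that] card_V by (simp add: triangulation_def)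
  have "m - 1 \<le> p - 2" "m \<le> p - 2" using assms by arith+
  then have "{vtx a, vtx b} \<in> triangulation V E \<sigma>" "{vtx b, vtx m} \<in> triangulation V E \<sigma>"
      "{vtx a, vtx m} \<in> triangulation V E \<sigma>"
    using tri fa fb fab by (meson subsetD)+
  moreover have "{vtx a, vtx b} \<notin> E" "{vtx b, vtx m} \<notin> E" "{vtx a, vtx m} \<notin> E"
    using assms nonfree by (auto simp: ord_edge_def)
  ultimately show False by (rule GB_no_triangle)
qed

lemma GB_product_const_factor:
  assumes "1 \<le> m" "m < b" "b < a" "a \<le> p" "\<not> ed a b"
    and "ed a m \<Longrightarrow> (\<exists>c. \<forall>t\<in>S. par_L ed (Z t) a m = c) \<or> (\<exists>c. \<forall>t\<in>S. par_L ed (Z t) b m = c)"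
    and "ed b m \<Longrightarrow> (\<exists>c. \<forall>t\<in>S. par_L ed (Z t) a m = c) \<or> (\<exists>c. \<forall>t\<in>S. par_L ed (Z t) b m = c)"
  shows "(\<exists>c. \<forall>t\<in>S. par_L ed (Z t) a m = c) \<or> (\<exists>c. \<forall>t\<in>S. par_L ed (Z t) b m = c)"
proof (cases "(\<exists>t. par_L ed (Z t) a m \<noteq> 0) \<and> (\<exists>t. par_L ed (Z t) b m \<noteq> 0)")
  case True
  then have "ed a m \<or> ed b m"
    using GB_product_has_free_factor[OF assms(1-5)] by blast
  then show ?thesis using assms(6,7) by blast
qed blast

end

context ordered_graph
begin

definition Omega_of_LD :: "(nat \<times> nat \<Rightarrow> real) \<Rightarrow> nat \<times> nat \<Rightarrow> real" where
  "Omega_of_LD z = restrict (\<lambda>(a, b). \<Sum>k=1..b. par_L ed z a k * par_D z k * par_L ed z b k) I"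

lemma omega_of_sym: "omega_of V E \<sigma> x i j = omega_of V E \<sigma> x j i"
  by (simp add: omega_of_def max.commute min.commute)

lemma omega_of_Omega_of_LD_lower:
  assumes nz: "\<forall>l\<in>{1..p}. z (l, l) \<noteq> 0" and ij: "i \<in> {1..p}" "j \<in> {1..p}" "j \<le> i"
  shows "omega_of V E \<sigma> (Omega_of_LD z) i j = (\<Sum>k=1..p. par_L ed z i k * par_D z k * par_L ed z j k)"
proof -
  have "(\<Sum>k=1..p. par_L ed z i k * par_D z k * par_L ed z j k) =
      (\<Sum>k=1..j. par_L ed z i k * par_D z k * par_L ed z j k)"
    by (rule sum_Icc_eq_prefix) (use ij in \<open>auto simp: par_L_upper\<close>)
  also have "\<dots> = (\<Sum>k\<in>{1..<j}. par_L ed z i k * par_D z k * par_L ed z j k) + par_L ed z i j * par_D z j"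
    using sum_Icc_last[of j "\<lambda>k. par_L ed z i k * par_D z k * par_L ed z j k"] ij by (simp add: par_L_diag)
  finally have sum: "(\<Sum>k=1..p. par_L ed z i k * par_D z k * par_L ed z j k) = \<dots>" .
  have mm: "max i j = i" "min i j = j" using ij by auto
  show ?thesis
  proof (cases "(i, j) \<in> I")
    case True
    then show ?thesis using ij sum sum_Icc_last[of j "\<lambda>k. par_L ed z i k * par_D z k * par_L ed z j k"]
      by (simp add: omega_of_def mm Omega_of_LD_def par_L_diag)
  next
    case False
    then have "j < i" "\<not> ed i j" using ij free_idx_iff by auto
    then show ?thesis
      using False sum ij par_D_nz[OF nz, of j] by (simp add: omega_of_def mm par_L_nonedge)
  qed
qed

lemma omega_of_Omega_of_LD:
  assumes nz: "\<forall>l\<in>{1..p}. z (l, l) \<noteq> 0" and ij: "i \<in> {1..p}" "j \<in> {1..p}"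
  shows "omega_of V E \<sigma> (Omega_of_LD z) i j = (\<Sum>k=1..p. par_L ed z i k * par_D z k * par_L ed z j k)"
proof (cases "j \<le> i")
  case True then show ?thesis using omega_of_Omega_of_LD_lower[OF nz ij] by simp
next
  case False
  then show ?thesis
    using omega_of_Omega_of_LD_lower[OF nz ij(2,1)] by (simp add: omega_of_sym[of _ i j] mult_ac)
qed

lemma is_mod_chol_Omega_of_LD:
  assumes pos: "\<forall>l\<in>{1..p}. z (l, l) > 0"
  shows "is_mod_chol p (omega_of V E \<sigma> (Omega_of_LD z)) (trunc_mat p (par_L ed z)) (trunc_vec p (par_D z))"
proof (rule is_mod_chol_truncI[OF unit_lower_tri_par_L])
  have "\<forall>l\<in>{1..p}. z (l, l) \<noteq> 0" using pos by auto
  then show "\<forall>i\<in>{1..p}. \<forall>j\<in>{1..p}. omega_of V E \<sigma> (Omega_of_LD z) i j =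
      (\<Sum>k=1..p. par_L ed z i k * par_D z k * par_L ed z j k)"
    using omega_of_Omega_of_LD by blast
qed (use par_D_pos[OF pos] in auto)

lemma not_sym_pd_Omega_of_LD:
  assumes nz: "\<forall>l\<in>{1..p}. z (l, l) \<noteq> 0" and not_pos: "\<not> (\<forall>l\<in>{1..p}. z (l, l) > 0)"
  shows "\<not> sym_pd p (omega_of V E \<sigma> (Omega_of_LD z))"
proof
  assume pd: "sym_pd p (omega_of V E \<sigma> (Omega_of_LD z))"
  have pos: "par_D z c > 0" if c: "c \<in> {1..p}" for c
  proof (rule sym_pd_LDL_block_pivot_pos[OF pd unit_lower_tri_par_L c])
    show "\<forall>a\<in>{1..c}. \<forall>b\<in>{1..c}. omega_of V E \<sigma> (Omega_of_LD z) a b =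
        (\<Sum>k=1..c. par_L ed z a k * par_D z k * par_L ed z b k)"
    proof (intro ballI)
      fix a b assume ab: "a \<in> {1..c}" "b \<in> {1..c}"
      then have "omega_of V E \<sigma> (Omega_of_LD z) a b = (\<Sum>k=1..p. par_L ed z a k * par_D z k * par_L ed z b k)"
        using omega_of_Omega_of_LD[OF nz] c by auto
      also have "\<dots> = (\<Sum>k=1..c. par_L ed z a k * par_D z k * par_L ed z b k)"
        by (rule sum_Icc_eq_prefix) (use ab c in \<open>auto simp: par_L_upper\<close>)
      finally show "omega_of V E \<sigma> (Omega_of_LD z) a b = \<dots>" .
    qed
  qed
  have "z (l, l) > 0" if l: "l \<in> {1..p}" for l
  proof -
    have "par_D z l = par_D z (l - 1) * z (l, l)" using l par_D_Suc[of z "l - 1"] by auto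
    moreover have "par_D z (l - 1) > 0"
    proof (cases "l = 1")
      case False then show ?thesis using l by (intro pos) auto
    qed (simp add: par_D_def)
    ultimately show ?thesis using pos[OF l] by (simp add: zero_less_mult_iff)
  qed
  then show False using not_pos by blast
qed

lemma Dtilde_par_D:
  assumes "\<forall>l\<in>{1..p}. z (l, l) > 0" "i \<in> {1..p}"
  shows "Dtilde (trunc_vec p (par_D z)) i = z (i, i)"
proof (cases "i = 1")
  case False
  then have "par_D z i = par_D z (i - 1) * z (i, i)" "par_D z (i - 1) > 0" "i - 1 \<in> {1..p}"
    using assms par_D_Suc[of z "i - 1"] par_D_pos[OF assms(1), of "i - 1"] by auto
  then show ?thesis using assms False by (simp add: Dtilde_def trunc_vec_def)
qed (use assms in \<open>simp add: Dtilde_def trunc_vec_def par_D_def\<close>)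

lemma LD_coords_Omega_of_LD:
  assumes z: "z \<in> space (PiM I (\<lambda>_. lborel))" and pos: "\<forall>l\<in>{1..p}. z (l, l) > 0"
  shows "LD_coords V E \<sigma> (Omega_of_LD z) = z"
proof
  fix c
  note chol = chol_LD_eqI[OF is_mod_chol_Omega_of_LD[OF pos]]
  show "LD_coords V E \<sigma> (Omega_of_LD z) c = z c"
  proof (cases "c \<in> I")
    case False
    then show ?thesis using z by (cases c) (auto simp: LD_coords_def Let_def space_PiM PiE_def extensional_def)
  next
    case True
    then obtain i j where c: "c = (i, j)" and ij: "i \<in> {1..p}" "j \<in> {1..p}" "j \<le> i" "i = j \<or> ed i j"
      using free_idx_iff by (cases c) auto
    show ?thesis
    proof (cases "j < i")
      case True
      then have "trunc_mat p (par_L ed z) i j = z (i, j)"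
        using ij by (simp add: trunc_mat_def par_L_edge)
      then show ?thesis using \<open>c \<in> I\<close> c True card_V chol by (simp add: LD_coords_def Let_def)
    next
      case False
      then show ?thesis using \<open>c \<in> I\<close> c ij card_V chol Dtilde_par_D[OF pos, of i]
        by (simp add: LD_coords_def Let_def)
    qed
  qed
qed

lemma trace_LDL:
  fixes L U :: "nat \<Rightarrow> nat \<Rightarrow> real" and D :: "nat \<Rightarrow> real"
  shows "(\<Sum>i=1..p. \<Sum>j=1..p. (\<Sum>k=1..p. L i k * D k * L j k) * U j i) =
         (\<Sum>k=1..p. D k * quad_form p U (\<lambda>i. L i k))"
proof -
  have qf: "(\<Sum>i=1..p. \<Sum>j=1..p. L i k * U j i * L j k) = quad_form p U (\<lambda>i. L i k)" for k
    unfolding quad_form_def by (subst sum.swap) (simp add: mult_ac)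
  have "(\<Sum>i=1..p. \<Sum>j=1..p. (\<Sum>k=1..p. L i k * D k * L j k) * U j i) =
      (\<Sum>i=1..p. \<Sum>j=1..p. \<Sum>k=1..p. D k * (L i k * U j i * L j k))"
    by (intro sum.cong refl, subst sum_distrib_right, rule sum.cong) (simp_all add: mult_ac)
  also have "\<dots> = (\<Sum>i=1..p. \<Sum>k=1..p. \<Sum>j=1..p. D k * (L i k * U j i * L j k))"
    by (rule sum.cong[OF refl], rule sum.swap)
  also have "\<dots> = (\<Sum>k=1..p. \<Sum>i=1..p. \<Sum>j=1..p. D k * (L i k * U j i * L j k))"
    by (rule sum.swap)
  also have "\<dots> = (\<Sum>k=1..p. D k * quad_form p U (\<lambda>i. L i k))"
    by (simp only: sum_distrib_left[symmetric] qf)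
  finally show ?thesis .
qed

lemma gw_unnorm_Omega_of_LD:
  assumes pos: "\<forall>l\<in>{1..p}. z (l, l) > 0"
  shows "gw_unnorm V E \<sigma> U \<delta> (Omega_of_LD z) = (\<Prod>k=1..p. par_D z k powr (\<delta> k / 2)) *
     exp (- (1/2) * (\<Sum>k=1..p. par_D z k * quad_form p U (\<lambda>i. par_L ed z i k)))"
proof -
  note chol = is_mod_chol_Omega_of_LD[OF pos]
  have "(\<Sum>i=1..p. \<Sum>j=1..p. omega_of V E \<sigma> (Omega_of_LD z) i j * U j i) =
      (\<Sum>i=1..p. \<Sum>j=1..p. (\<Sum>k=1..p. par_L ed z i k * par_D z k * par_L ed z j k) * U j i)"
    using pos by (intro sum.cong refl arg_cong2[where f="(*)"] omega_of_Omega_of_LD) auto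
  also have "\<dots> = (\<Sum>k=1..p. par_D z k * quad_form p U (\<lambda>i. par_L ed z i k))"
    by (rule trace_LDL)
  finally show ?thesis
    using is_mod_chol_sym_pd[OF chol] chol_LD_eqI[OF chol] card_V
    by (simp add: gw_unnorm_def Let_def trunc_vec_def)
qed

lemma gw_unnorm_Omega_of_LD_not_pos:
  assumes "\<forall>l\<in>{1..p}. z (l, l) \<noteq> 0" "\<not> (\<forall>l\<in>{1..p}. z (l, l) > 0)"
  shows "gw_unnorm V E \<sigma> U \<delta> (Omega_of_LD z) = 0"
  using not_sym_pd_Omega_of_LD[OF assms] card_V by (simp add: gw_unnorm_def Let_def)

lemma gw_unnorm_nonneg: "gw_unnorm V E \<sigma> U \<delta> x \<ge> 0"
  by (simp add: gw_unnorm_def Let_def prod_nonneg)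

abbreviation "M \<equiv> PiM I (\<lambda>_. lborel :: real measure)"

lemma borel_measurable_omega_of: "(\<lambda>x. omega_of V E \<sigma> x a b) \<in> borel_measurable M"
  unfolding omega_of_def
  by (cases "(max a b, min a b) \<in> I") (simp_all add: measurable_PiM_lborel_coord)

lemma borel_measurable_ldl_omega_of:
  "(\<lambda>x. ldl_D (omega_of V E \<sigma> x) k) \<in> borel_measurable M"
  "(\<lambda>x. ldl_L (omega_of V E \<sigma> x) i k) \<in> borel_measurable M"
  using borel_measurable_ldl[of "\<lambda>x. omega_of V E \<sigma> x", OF borel_measurable_omega_of] by blast+

lemma pred_sym_pd_omega_of: "Measurable.pred M (\<lambda>x. sym_pd p (omega_of V E \<sigma> x))"
proof -
  have "Measurable.pred M (\<lambda>x. \<forall>k\<in>{1..p}. ldl_D (omega_of V E \<sigma> x) k > 0)"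
    by (rule pred_intros_finite) (use borel_measurable_ldl_omega_of in measurable)
  then show ?thesis
    by (subst sym_pd_iff_ldl_D_pos) (use omega_of_sym in auto)
qed

lemma borel_measurable_gw_unnorm: "gw_unnorm V E \<sigma> U \<delta> \<in> borel_measurable M"
proof -
  have eq: "gw_unnorm V E \<sigma> U \<delta> x = (if sym_pd p (omega_of V E \<sigma> x) then
     (\<Prod>k=1..p. ldl_D (omega_of V E \<sigma> x) k powr (\<delta> k / 2)) *
       exp (- (1/2) * (\<Sum>i=1..p. \<Sum>j=1..p. omega_of V E \<sigma> x i j * U j i)) else 0)" for x
    using chol_LD_sym_pd card_V by (auto simp: gw_unnorm_def Let_def trunc_vec_def intro!: prod.cong)
  have "(\<lambda>x. \<Prod>k=1..p. ldl_D (omega_of V E \<sigma> x) k powr (\<delta> k / 2)) \<in> borel_measurable M"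
    by (rule borel_measurable_prod) (use borel_measurable_ldl_omega_of in measurable)
  then show ?thesis
    unfolding eq[abs_def] using pred_sym_pd_omega_of borel_measurable_omega_of by measurable
qed

lemma measurable_LD_coords: "LD_coords V E \<sigma> \<in> measurable M M"
proof -
  define good where "good x = restrict (\<lambda>(i, j). if j < i then trunc_mat p (ldl_L (omega_of V E \<sigma> x)) i j
      else Dtilde (trunc_vec p (ldl_D (omega_of V E \<sigma> x))) i) I" for x
  define junk :: "(nat \<Rightarrow> nat \<Rightarrow> real) \<times> (nat \<Rightarrow> real)" where "junk = The (\<lambda>_. False)"
  define bad where "bad = restrict (\<lambda>(i, j). if j < i then fst junk i j else Dtilde (snd junk) i) I"
  have eq: "LD_coords V E \<sigma> x = (if sym_pd p (omega_of V E \<sigma> x) then good x else bad)" for x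
    using chol_LD_sym_pd chol_THE_not_sym_pd card_V
    by (auto simp: LD_coords_def Let_def good_def bad_def junk_def chol_L_def chol_D_def)
  have "good \<in> measurable M M"
    unfolding good_def
  proof (rule measurable_restrict)
    fix c :: "nat \<times> nat"
    obtain i j where c: "c = (i, j)" by (cases c)
    have "(\<lambda>x. if j < i then trunc_mat p (ldl_L (omega_of V E \<sigma> x)) i j
        else Dtilde (trunc_vec p (ldl_D (omega_of V E \<sigma> x))) i) \<in> borel_measurable M"
      unfolding trunc_mat_def trunc_vec_def Dtilde_def using borel_measurable_ldl_omega_of by measurable
    then show "(\<lambda>x. case c of (i, j) \<Rightarrow> if j < i then trunc_mat p (ldl_L (omega_of V E \<sigma> x)) i j
        else Dtilde (trunc_vec p (ldl_D (omega_of V E \<sigma> x))) i) \<in> measurable M lborel"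
      using c by simp
  qed
  moreover have "(\<lambda>x. bad) \<in> measurable M M"
    by (rule measurable_const) (auto simp: bad_def space_PiM)
  ultimately show ?thesis
    unfolding eq[abs_def] using pred_sym_pd_omega_of by measurable
qed

lemma measurable_Omega_of_LD: "Omega_of_LD \<in> measurable M M"
  unfolding Omega_of_LD_def
proof (rule measurable_restrict)
  fix c :: "nat \<times> nat"
  obtain a b where c: "c = (a, b)" by (cases c)
  have "(\<lambda>z. \<Sum>k=1..b. par_L ed z a k * par_D z k * par_L ed z b k) \<in> borel_measurable M"
    using borel_measurable_par_L[of "\<lambda>z. z", OF measurable_PiM_lborel_coord]
      borel_measurable_par_D[of "\<lambda>z. z", OF measurable_PiM_lborel_coord] by measurable
  then show "(\<lambda>z. case c of (a, b) \<Rightarrow> \<Sum>k=1..b. par_L ed z a k * par_D z k * par_L ed z b k)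
      \<in> measurable M lborel" using c by simp
qed

end

section \<open>The density of \<open>(L\<^sub>I, D\<^sup>~)\<close>\<close>

context ordered_graph
begin

text \<open>For \<open>a > b\<close> we have \<open>\<Omega> a b = (\<Sum>m<b. L a m * D m * L b m) + D b * L a b\<close> and
  \<open>\<Omega> b b = (\<Sum>m<b. D m * (L b m)\<^sup>2) + D (b - 1) * D\<^sup>~ b\<close>. Ranking the coordinates column by column,
  diagonal first, each entry of \<open>\<Omega>\<close> is thus affine in the corresponding coordinate of \<open>(L\<^sub>I, D\<^sup>~)\<close>,
  with coefficients depending only on coordinates of smaller rank.\<close>
definition chain_rank :: "nat \<times> nat \<Rightarrow> nat" where
  "chain_rank c = (case c of (a, b) \<Rightarrow> b * (p + 1) + (if a = b then 0 else a))"

definition chain_offset :: "(nat \<times> nat \<Rightarrow> real) \<Rightarrow> nat \<times> nat \<Rightarrow> real" where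
  "chain_offset z c = (case c of (a, b) \<Rightarrow> \<Sum>m\<in>{1..<b}. par_L ed z a m * par_D z m * par_L ed z b m)"

definition chain_slope :: "(nat \<times> nat \<Rightarrow> real) \<Rightarrow> nat \<times> nat \<Rightarrow> real" where
  "chain_slope z c = (case c of (a, b) \<Rightarrow> if a = b then par_D z (b - 1) else par_D z b)"

text \<open>The slope with its zeros replaced by \<open>1\<close>; this only matters on a null set.\<close>
definition chain_slope_nz :: "(nat \<times> nat \<Rightarrow> real) \<Rightarrow> nat \<times> nat \<Rightarrow> real" where
  "chain_slope_nz z c = (if chain_slope z c = 0 then 1 else chain_slope z c)"

definition LD_jac :: "(nat \<times> nat \<Rightarrow> real) \<Rightarrow> real" where
  "LD_jac z = (\<Prod>c\<in>I. \<bar>chain_slope z c\<bar>)"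

lemma LD_jac_nonneg: "LD_jac z \<ge> 0"
  by (simp add: LD_jac_def prod_nonneg)

lemma chain_rank_col_le:
  assumes "(a, b) \<in> I" "(a', b') \<in> I" "chain_rank (a, b) \<le> chain_rank (a', b')"
  shows "b \<le> b'"
proof (rule ccontr)
  assume "\<not> b \<le> b'"
  then have "Suc b' * (p + 1) \<le> b * (p + 1)" by (intro mult_le_mono1) simp
  moreover have "a' \<le> p" using assms free_idx_iff by auto
  ultimately have "chain_rank (a', b') < chain_rank (a, b)" by (auto simp: chain_rank_def)
  then show False using assms(3) by simp
qed

lemma chain_rank_inj: "inj_on chain_rank I"
proof (rule inj_onI)
  fix c d assume c: "c \<in> I" and d: "d \<in> I" and eq: "chain_rank c = chain_rank d"
  obtain a b a' b' where cd: "c = (a, b)" "d = (a', b')" by (cases c, cases d)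
  have "b = b'" using chain_rank_col_le[of a b a' b'] chain_rank_col_le[of a' b' a b] c d eq cd by auto
  moreover have "a \<ge> 1" "a' \<ge> 1" using c d cd free_idx_iff by auto
  ultimately show "c = d" using eq cd by (auto simp: chain_rank_def split: if_splits)
qed

lemma chain_rank_less: "c \<in> I \<Longrightarrow> chain_rank c < (p + 1) * (p + 1)"
proof -
  assume "c \<in> I"
  then obtain a b where c: "c = (a, b)" "a \<le> p" "b \<le> p" using free_idx_iff by (cases c) auto
  then have "b * (p + 1) + a < (p + 1) * (p + 1)"
    by (metis add_less_le_mono le_imp_less_Suc mult_le_mono1 mult_Suc add.commute plus_1_eq_Suc
      less_add_same_cancel2 add_Suc_right add_le_cancel_left le_add2)
  then show ?thesis using c by (auto simp: chain_rank_def)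
qed

lemma chain_offset_indep:
  assumes "c \<in> I" "d \<in> I" "chain_rank c \<le> chain_rank d"
  shows "chain_offset (y(d := t)) c = chain_offset y c"
proof -
  obtain a b a' b' where cd: "c = (a, b)" "d = (a', b')" by (cases c, cases d)
  then have "b \<le> b'" using chain_rank_col_le assms by blast
  then have "par_L ed (y(d := t)) i m = par_L ed y i m" "par_D (y(d := t)) m = par_D y m" if "m < b" for i m
    using that cd by (auto intro!: par_L_cong[where j="b - 1"] par_D_cong)
  then show ?thesis by (auto simp: chain_offset_def cd intro!: sum.cong)
qed

lemma chain_slope_indep:
  assumes "c \<in> I" "d \<in> I" "chain_rank c \<le> chain_rank d"
  shows "chain_slope (y(d := t)) c = chain_slope y c"
proof -
  obtain a b a' b' where cd: "c = (a, b)" "d = (a', b')" by (cases c, cases d)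
  then have bb: "b \<le> b'" using chain_rank_col_le assms by blast
  show ?thesis
  proof (cases "a = b")
    case True
    have "par_D (y(d := t)) (b - 1) = par_D y (b - 1)" by (rule par_D_cong) (use bb cd in auto)
    then show ?thesis using True by (simp add: chain_slope_def cd)
  next
    case False
    have "a \<ge> 1" using assms cd free_idx_iff by auto
    then have "d \<noteq> (b, b)" using assms False by (auto simp: chain_rank_def cd)
    then have "d \<noteq> (l, l)" if "1 \<le> l" "l \<le> b" for l using bb cd that by auto
    then have "par_D (y(d := t)) b = par_D y b" by (intro par_D_cong) auto
    then show ?thesis using False by (simp add: chain_slope_def cd)
  qed
qed

lemma borel_measurable_chain:
  "(\<lambda>z. chain_offset z c) \<in> borel_measurable M" "(\<lambda>z. chain_slope z c) \<in> borel_measurable M"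
  "(\<lambda>z. chain_slope_nz z c) \<in> borel_measurable M"
proof -
  note L = borel_measurable_par_L[of "\<lambda>z. z", OF measurable_PiM_lborel_coord]
   and D = borel_measurable_par_D[of "\<lambda>z. z", OF measurable_PiM_lborel_coord]
  obtain a b where c: "c = (a, b)" by (cases c)
  show off: "(\<lambda>z. chain_offset z c) \<in> borel_measurable M"
    unfolding chain_offset_def c using L D by simp measurable
  show sl: "(\<lambda>z. chain_slope z c) \<in> borel_measurable M"
    unfolding chain_slope_def c using D by simp
  show "(\<lambda>z. chain_slope_nz z c) \<in> borel_measurable M"
    unfolding chain_slope_nz_def using sl by measurable
qed

lemma borel_measurable_LD_jac: "LD_jac \<in> borel_measurable M"
  unfolding LD_jac_def[abs_def]
  by (rule borel_measurable_prod) (use borel_measurable_chain in measurable)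

lemma affine_chain_data: "affine_chain_data I chain_rank chain_offset chain_slope_nz"
  by unfold_locales
    (use finite_free_idx chain_rank_inj borel_measurable_chain chain_offset_indep chain_slope_indep in
      \<open>auto simp: chain_slope_nz_def\<close>)

lemma affine_chain_Omega_of_LD:
  assumes z: "z \<in> space M" and nz: "\<forall>l\<in>{1..p}. z (l, l) \<noteq> 0"
  defines "r \<equiv> (p + 1) * (p + 1)"
  shows "affine_chain I chain_rank r chain_offset chain_slope_nz z = Omega_of_LD z"
    and "affine_chain_jac I chain_rank r chain_slope_nz z = LD_jac z"
proof -
  have slope: "chain_slope_nz z c = chain_slope z c" if "c \<in> I" for c
    using that par_D_nz[OF nz] free_idx_iff
    by (cases c) (auto simp: chain_slope_nz_def chain_slope_def)
  show "affine_chain I chain_rank r chain_offset chain_slope_nz z = Omega_of_LD z"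
  proof
    fix c
    show "affine_chain I chain_rank r chain_offset chain_slope_nz z c = Omega_of_LD z c"
    proof (cases "c \<in> I")
      case False
      then show ?thesis using z
        by (cases c) (auto simp: affine_chain_def Omega_of_LD_def space_PiM PiE_def extensional_def)
    next
      case True
      then obtain a b where c: "c = (a, b)" and ab: "a \<in> {1..p}" "b \<in> {1..p}" "b \<le> a" "a = b \<or> ed a b"
        using free_idx_iff by (cases c) auto
      have "chain_offset z c + chain_slope z c * z c = (\<Sum>k=1..b. par_L ed z a k * par_D z k * par_L ed z b k)"
      proof (cases "a = b")
        case True
        then show ?thesis using ab par_D_Suc[of z "b - 1"] sum_Icc_last[of b "\<lambda>k. par_L ed z b k * par_D z k * par_L ed z b k"]
          by (simp add: chain_offset_def chain_slope_def c par_L_diag)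
      next
        case False
        then show ?thesis using ab sum_Icc_last[of b "\<lambda>k. par_L ed z a k * par_D z k * par_L ed z b k"]
          by (simp add: chain_offset_def chain_slope_def c par_L_diag par_L_edge mult_ac)
      qed
      then show ?thesis using True chain_rank_less[OF True] slope[OF True]
        by (simp add: affine_chain_def Omega_of_LD_def r_def c)
    qed
  qed
  have "{c \<in> I. chain_rank c < r} = I" using chain_rank_less by (auto simp: r_def)
  then show "affine_chain_jac I chain_rank r chain_slope_nz z = LD_jac z"
    using slope by (simp add: affine_chain_jac_def LD_jac_def)
qed

definition LD_density :: "(nat \<Rightarrow> nat \<Rightarrow> real) \<Rightarrow> (nat \<Rightarrow> real) \<Rightarrow> (nat \<times> nat \<Rightarrow> real) \<Rightarrow> real" where
  "LD_density U \<delta> z =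
     (if \<forall>l\<in>{1..p}. z (l, l) > 0 then gw_unnorm V E \<sigma> U \<delta> (Omega_of_LD z) * LD_jac z else 0)"

lemma borel_measurable_LD_density: "LD_density U \<delta> \<in> borel_measurable M"
proof -
  have "Measurable.pred M (\<lambda>z. \<forall>l\<in>{1..p}. z (l, l) > (0::real))"
    by (rule pred_intros_finite) (use measurable_PiM_lborel_coord in measurable)
  then show ?thesis
    unfolding LD_density_def[abs_def]
    using measurable_compose[OF measurable_Omega_of_LD borel_measurable_gw_unnorm] borel_measurable_LD_jac
    by measurable
qed

end

lemma distr_density_eqI:
  assumes T: "T \<in> measurable M M" and f: "f \<in> borel_measurable M" and g: "g \<in> borel_measurable M"
    and eq: "\<And>A. A \<in> sets M \<Longrightarrow> (\<integral>\<^sup>+x. f x * indicator A (T x) \<partial>M) = (\<integral>\<^sup>+x. g x * indicator A x \<partial>M)"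
  shows "distr (density M f) M T = density M g"
proof (rule measure_eqI)
  fix A assume "A \<in> sets (distr (density M f) M T)"
  then have A: "A \<in> sets M" by simp
  have "emeasure (distr (density M f) M T) A = emeasure (density M f) (T -` A \<inter> space M)"
    using T A by (simp add: emeasure_distr cong: measurable_cong_sets)
  also have "\<dots> = (\<integral>\<^sup>+x. f x * indicator (T -` A \<inter> space M) x \<partial>M)"
    using T A f by (simp add: emeasure_density measurable_sets)
  also have "\<dots> = (\<integral>\<^sup>+x. f x * indicator A (T x) \<partial>M)"
    by (rule nn_integral_cong) (auto simp: indicator_def)
  also have "\<dots> = emeasure (density M g) A"
    using A g by (simp add: eq emeasure_density)
  finally show "emeasure (distr (density M f) M T) A = emeasure (density M g) A" .
qed simp

context ordered_graph
begin

lemma nn_integral_LD_coords: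
  assumes F: "F \<in> borel_measurable M"
  shows "(\<integral>\<^sup>+x. ennreal (gw_unnorm V E \<sigma> U \<delta> x) * F (LD_coords V E \<sigma> x) \<partial>M) =
    (\<integral>\<^sup>+z. ennreal (LD_density U \<delta> z) * F z \<partial>M)"
proof -
  interpret affine_chain_data I chain_rank chain_offset chain_slope_nz by (rule affine_chain_data)
  let ?r = "(p + 1) * (p + 1)"
  define G where "G x = ennreal (gw_unnorm V E \<sigma> U \<delta> x) * F (LD_coords V E \<sigma> x)" for x
  have "G \<in> borel_measurable M"
    unfolding G_def using borel_measurable_gw_unnorm measurable_compose[OF measurable_LD_coords F]
    by measurable
  then have "(\<integral>\<^sup>+x. G x \<partial>M) =
      (\<integral>\<^sup>+z. G (affine_chain I chain_rank ?r chain_offset chain_slope_nz z) *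
         ennreal (affine_chain_jac I chain_rank ?r chain_slope_nz z) \<partial>M)"
    by (rule nn_integral_affine_chain)
  also have "\<dots> = (\<integral>\<^sup>+z. ennreal (LD_density U \<delta> z) * F z \<partial>M)"
  proof (rule nn_integral_cong_AE)
    have "AE z in M. \<forall>l\<in>{1..p}. z (l, l) \<noteq> 0"
      by (rule eventually_ball_finite) (use AE_PiM_lborel_coord_neq[OF finite_free_idx] free_idx_iff in auto)
    then show "AE z in M. G (affine_chain I chain_rank ?r chain_offset chain_slope_nz z) *
        ennreal (affine_chain_jac I chain_rank ?r chain_slope_nz z) = ennreal (LD_density U \<delta> z) * F z"
    proof (rule AE_mp[OF _ AE_I2[OF impI]])
      fix z assume z: "z \<in> space M" and nz: "\<forall>l\<in>{1..p}. z (l, l) \<noteq> 0"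
      show "G (affine_chain I chain_rank ?r chain_offset chain_slope_nz z) *
          ennreal (affine_chain_jac I chain_rank ?r chain_slope_nz z) = ennreal (LD_density U \<delta> z) * F z"
      proof (cases "\<forall>l\<in>{1..p}. z (l, l) > 0")
        case True
        then show ?thesis
          using affine_chain_Omega_of_LD[OF z nz] LD_coords_Omega_of_LD[OF z True] gw_unnorm_nonneg LD_jac_nonneg
          by (simp add: G_def LD_density_def ennreal_mult' mult_ac)
      next
        case False
        then show ?thesis
          using affine_chain_Omega_of_LD[OF z nz] gw_unnorm_Omega_of_LD_not_pos[OF nz False]
          by (simp add: G_def LD_density_def)
      qed
    qed
  qed
  finally show ?thesis unfolding G_def .
qed

text \<open>If the normalising integral is \<open>0\<close> or \<open>\<infinity>\<close>, the density of \<open>gen_G_wishart\<close> vanishes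
  almost everywhere, and \<open>K = 0\<close> works.\<close>
lemma gen_G_wishart_eq_density:
  obtains K where "K \<ge> 0" "gen_G_wishart V E \<sigma> U \<delta> = density M (\<lambda>x. ennreal (K * gw_unnorm V E \<sigma> U \<delta> x))"
proof -
  let ?gw = "gw_unnorm V E \<sigma> U \<delta>"
  define Z where "Z = (\<integral>\<^sup>+x. ennreal (?gw x) \<partial>M)"
  have gen: "gen_G_wishart V E \<sigma> U \<delta> = density M (\<lambda>x. ennreal (?gw x) / Z)"
    by (simp add: gen_G_wishart_def free_lebesgue_def Z_def)
  have gw_m: "(\<lambda>x. ennreal (?gw x)) \<in> borel_measurable M"
    using borel_measurable_gw_unnorm by measurable
  show ?thesis
  proof (cases "Z = 0 \<or> Z = \<infinity>")
    case True
    have "AE x in M. ennreal (?gw x) / Z = ennreal (0 * ?gw x)"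
    proof (cases "Z = \<infinity>")
      case False
      then have "AE x in M. ennreal (?gw x) = 0"
        using True nn_integral_0_iff_AE[OF gw_m] by (simp add: Z_def)
      then show ?thesis by eventually_elim simp
    qed simp
    then have "gen_G_wishart V E \<sigma> U \<delta> = density M (\<lambda>x. ennreal (0 * ?gw x))"
      unfolding gen by (intro density_cong) (use gw_m in auto)
    then show ?thesis by (rule that[OF order.refl])
  next
    case False
    then obtain z0 where Z: "Z = ennreal z0" "z0 > 0"
      by (cases Z rule: ennreal_cases) auto
    have "ennreal (?gw x) / Z = ennreal (1 / z0 * ?gw x)" for x
      using Z gw_unnorm_nonneg by (simp add: divide_ennreal)
    then have "gen_G_wishart V E \<sigma> U \<delta> = density M (\<lambda>x. ennreal (1 / z0 * ?gw x))"
      unfolding gen by simp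
    then show ?thesis using Z by (intro that[of "1 / z0"]) simp_all
  qed
qed

lemma distr_LD_coords:
  obtains K where "K \<ge> 0"
    "distr (gen_G_wishart V E \<sigma> U \<delta>) M (LD_coords V E \<sigma>) = density M (\<lambda>z. ennreal (K * LD_density U \<delta> z))"
proof -
  obtain K where K: "K \<ge> 0"
    "gen_G_wishart V E \<sigma> U \<delta> = density M (\<lambda>x. ennreal (K * gw_unnorm V E \<sigma> U \<delta> x))"
    by (rule gen_G_wishart_eq_density)
  have "distr (density M (\<lambda>x. ennreal K * ennreal (gw_unnorm V E \<sigma> U \<delta> x))) M (LD_coords V E \<sigma>) =
      density M (\<lambda>z. ennreal K * ennreal (LD_density U \<delta> z))"
  proof (rule distr_density_eqI[OF measurable_LD_coords])
    fix A assume A: "A \<in> sets M"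
    then show "(\<integral>\<^sup>+x. ennreal K * ennreal (gw_unnorm V E \<sigma> U \<delta> x) * indicator A (LD_coords V E \<sigma> x) \<partial>M) =
        (\<integral>\<^sup>+x. ennreal K * ennreal (LD_density U \<delta> x) * indicator A x \<partial>M)"
      using nn_integral_LD_coords[of "indicator A" U \<delta>] measurable_LD_coords borel_measurable_gw_unnorm
        borel_measurable_LD_density
      by (simp add: mult.assoc nn_integral_cmult)
  qed (use borel_measurable_gw_unnorm borel_measurable_LD_density in measurable)
  then show ?thesis
    using K by (intro that[of K]) (simp_all add: ennreal_mult')
qed

end

definition affine_in :: "(real \<Rightarrow> real) \<Rightarrow> real set \<Rightarrow> (real \<Rightarrow> real) \<Rightarrow> bool" where
  "affine_in \<phi> S f \<longleftrightarrow> (\<exists>\<alpha> \<beta>. \<forall>t\<in>S. f t = \<alpha> + \<beta> * \<phi> t)"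

lemma affine_in_const: "affine_in \<phi> S (\<lambda>t. c)"
  unfolding affine_in_def by (intro exI[of _ c] exI[of _ 0]) simp

lemma affine_in_basis: "affine_in \<phi> S \<phi>"
  unfolding affine_in_def by (intro exI[of _ 0] exI[of _ 1]) simp

lemma affine_in_cong: "(\<And>t. t \<in> S \<Longrightarrow> f t = g t) \<Longrightarrow> affine_in \<phi> S g \<Longrightarrow> affine_in \<phi> S f"
  unfolding affine_in_def by metis

lemma affine_in_add:
  assumes "affine_in \<phi> S f" "affine_in \<phi> S g"
  shows "affine_in \<phi> S (\<lambda>t. f t + g t)"
proof -
  obtain \<alpha>1 \<beta>1 \<alpha>2 \<beta>2 where "\<forall>t\<in>S. f t = \<alpha>1 + \<beta>1 * \<phi> t" "\<forall>t\<in>S. g t = \<alpha>2 + \<beta>2 * \<phi> t"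
    using assms unfolding affine_in_def by blast
  then show ?thesis
    unfolding affine_in_def by (intro exI[of _ "\<alpha>1 + \<alpha>2"] exI[of _ "\<beta>1 + \<beta>2"]) (simp add: algebra_simps)
qed

lemma affine_in_cmult:
  assumes "affine_in \<phi> S f"
  shows "affine_in \<phi> S (\<lambda>t. c * f t)"
proof -
  obtain \<alpha> \<beta> where "\<forall>t\<in>S. f t = \<alpha> + \<beta> * \<phi> t"
    using assms unfolding affine_in_def by blast
  then show ?thesis
    unfolding affine_in_def by (intro exI[of _ "c * \<alpha>"] exI[of _ "c * \<beta>"]) (simp add: algebra_simps)
qed

lemma affine_in_sum:
  "finite A \<Longrightarrow> (\<And>m. m \<in> A \<Longrightarrow> affine_in \<phi> S (f m)) \<Longrightarrow> affine_in \<phi> S (\<lambda>t. \<Sum>m\<in>A. f m t)"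
  by (induction A rule: finite_induct) (auto intro: affine_in_add affine_in_const)

lemma affine_in_mult_const_factor:
  assumes "affine_in \<phi> S f" "affine_in \<phi> S g" "(\<exists>a. \<forall>t\<in>S. f t = a) \<or> (\<exists>a. \<forall>t\<in>S. g t = a)"
  shows "affine_in \<phi> S (\<lambda>t. f t * c * g t)"
  using assms(3)
proof (elim disjE exE)
  fix a assume "\<forall>t\<in>S. f t = a"
  then show ?thesis by (intro affine_in_cong[OF _ affine_in_cmult[OF assms(2), of "a * c"]]) auto
next
  fix a assume "\<forall>t\<in>S. g t = a"
  then show ?thesis
    by (intro affine_in_cong[OF _ affine_in_cmult[OF assms(1), of "c * a"]]) (auto simp: mult_ac)
qed

lemma quad_form_affine:
  fixes a b :: "nat \<Rightarrow> real"
  shows "quad_form n U (\<lambda>i. a i + b i * t) =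
    quad_form n U b * t\<^sup>2 + (\<Sum>i=1..n. \<Sum>j=1..n. a i * U i j * b j + b i * U i j * a j) * t + quad_form n U a"
proof -
  have e: "(a i + b i * t) * U i j * (a j + b j * t) =
      b i * U i j * b j * t\<^sup>2 + (a i * U i j * b j + b i * U i j * a j) * t + a i * U i j * a j" for i j
    by (simp add: algebra_simps power2_eq_square)
  show ?thesis unfolding quad_form_def e by (simp only: sum.distrib sum_distrib_right distrib_right)
qed

lemma exp_complete_square:
  fixes A B C t :: real
  assumes "A > 0"
  shows "exp (- (1/2) * (A * t\<^sup>2 + B * t + C)) =
    exp (- (1/2) * (C - B\<^sup>2 / (4 * A))) * exp (- ((t - (- B / (2 * A)))\<^sup>2) / (2 * (1 / A)))"
proof -
  have "- (1/2) * (A * t\<^sup>2 + B * t + C) = - (1/2) * (C - B\<^sup>2 / (4 * A)) + - ((t - (- B / (2 * A)))\<^sup>2) / (2 * (1 / A))"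
    using assms by (simp add: field_simps power2_eq_square)
  then show ?thesis by (simp add: exp_add[symmetric])
qed

context ordered_graph
begin

lemma LD_density_pos:
  assumes "\<forall>l\<in>{1..p}. z (l, l) > 0"
  shows "LD_density U \<delta> z = (\<Prod>k=1..p. par_D z k powr (\<delta> k / 2)) * LD_jac z *
     exp (- (1/2) * (\<Sum>k=1..p. par_D z k * quad_form p U (\<lambda>i. par_L ed z i k)))"
  using assms by (simp add: LD_density_def gw_unnorm_Omega_of_LD mult_ac)

lemma LD_density_not_pos:
  assumes "\<not> (\<forall>l\<in>{1..p}. z (l, l) > 0)"
  shows "LD_density U \<delta> z = 0"
  unfolding LD_density_def using assms by (rule if_not_P)

end

section \<open>The conditional densities of the entries of \<open>L\<^sub>I\<close>\<close>

context GB_ordered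
begin

lemma par_L_edge_update:
  "1 \<le> m \<Longrightarrow> m < a \<Longrightarrow> ed a m \<Longrightarrow> (a, m) \<noteq> d \<Longrightarrow> par_L ed (y(d := t)) a m = y (a, m)"
  by (simp add: par_L_edge)

lemma par_L_update_offdiag_col:
  assumes "b \<noteq> i0" "j0 < i0"
  shows "par_L ed (y((i0, j0) := t)) b j0 = par_L ed y b j0"
  by (rule par_L_cong_col) (use assms in auto)

lemma par_L_update_offdiag_const_factor:
  assumes c0: "(i0, j0) \<in> I" "j0 < i0" and "1 \<le> m" "m < b" "b < a" "a \<le> p" "\<not> ed a b"
  shows "(\<exists>c. \<forall>t\<in>UNIV. par_L ed (y((i0, j0) := t)) a m = c) \<or>
    (\<exists>c. \<forall>t\<in>UNIV. par_L ed (y((i0, j0) := t)) b m = c)"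
proof (rule GB_product_const_factor[OF assms(3-7)])
  show "(\<exists>c. \<forall>t\<in>UNIV. par_L ed (y((i0, j0) := t)) a m = c) \<or>
      (\<exists>c. \<forall>t\<in>UNIV. par_L ed (y((i0, j0) := t)) b m = c)" if "ed a m"
  proof (cases "(a, m) = (i0, j0)")
    case True
    then show ?thesis using par_L_update_offdiag_col[of b i0 j0] assms by auto
  qed (use that assms par_L_edge_update in auto)
  show "(\<exists>c. \<forall>t\<in>UNIV. par_L ed (y((i0, j0) := t)) a m = c) \<or>
      (\<exists>c. \<forall>t\<in>UNIV. par_L ed (y((i0, j0) := t)) b m = c)" if "ed b m"
  proof (cases "(b, m) = (i0, j0)")
    case True
    then show ?thesis using par_L_update_offdiag_col[of a i0 j0] assms by auto
  qed (use that assms par_L_edge_update in auto)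
qed

lemma par_L_affine_in_offdiag:
  assumes c0: "(i0, j0) \<in> I" "j0 < i0"
  shows "a \<in> {1..p} \<Longrightarrow> affine_in id UNIV (\<lambda>t. par_L ed (y((i0, j0) := t)) a b)"
proof (induction b arbitrary: a rule: less_induct)
  case (less b)
  let ?L = "\<lambda>a m t. par_L ed (y((i0, j0) := t)) a m"
  consider "b = 0 \<or> a \<le> b" | "1 \<le> b" "b < a" "ed a b" | "1 \<le> b" "b < a" "\<not> ed a b" by linarith
  then show ?case
  proof cases
    case 1
    then show ?thesis by (simp add: par_L_trivial affine_in_const)
  next
    case 2
    show ?thesis
    proof (cases "(a, b) = (i0, j0)")
      case True
      then have "(\<lambda>t. ?L a b t) = id" using 2 by (auto simp: par_L_edge)
      then show ?thesis using affine_in_basis by metis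
    next
      case False
      then have "(\<lambda>t. ?L a b t) = (\<lambda>t. y (a, b))" using 2 by (auto simp: par_L_edge)
      then show ?thesis using affine_in_const by metis
    qed
  next
    case 3
    have D: "par_D (y((i0, j0) := t)) m = par_D y m" for t m
      by (rule par_D_cong) (use c0 in auto)
    have summand: "affine_in id UNIV (\<lambda>t. ?L a m t * par_D y m * ?L b m t)" if m: "m \<in> {1..<b}" for m
    proof (rule affine_in_mult_const_factor)
      show "affine_in id UNIV (?L a m)" "affine_in id UNIV (?L b m)"
        by (rule less.IH; use m less.prems 3 in auto)+
      show "(\<exists>c. \<forall>t\<in>UNIV. ?L a m t = c) \<or> (\<exists>c. \<forall>t\<in>UNIV. ?L b m t = c)"
        by (rule par_L_update_offdiag_const_factor[OF c0 _ _ _ _ 3(3)]) (use m less.prems 3 in auto)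
    qed
    have eq: "?L a b t = (- 1 / par_D y b) * (\<Sum>m\<in>{1..<b}. ?L a m t * par_D y m * ?L b m t)" for t
      using 3 D by (simp add: par_L_nonedge)
    have "affine_in id UNIV (\<lambda>t. (- 1 / par_D y b) * (\<Sum>m\<in>{1..<b}. ?L a m t * par_D y m * ?L b m t))"
      by (intro affine_in_cmult affine_in_sum) (use summand in auto)
    then show ?thesis by (rule affine_in_cong[rotated]) (rule eq)
  qed
qed

lemma quad_form_cong: "(\<And>i. i \<in> {1..n} \<Longrightarrow> v i = w i) \<Longrightarrow> quad_form n U v = quad_form n U w"
  unfolding quad_form_def by (intro sum.cong refl) auto

lemma LD_quadratic_in_offdiag:
  assumes U: "sym_pd p U" and c0: "(i0, j0) \<in> I" "j0 < i0" and pos: "\<forall>l\<in>{1..p}. y (l, l) > 0"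
  obtains A B C where "A > 0"
    "\<And>t. (\<Sum>k=1..p. par_D y k * quad_form p U (\<lambda>i. par_L ed (y((i0, j0) := t)) i k)) = A * t\<^sup>2 + B * t + C"
proof -
  let ?y = "\<lambda>t. y((i0, j0) := t)"
  have ij: "i0 \<in> {1..p}" "j0 \<in> {1..p}" "ed i0 j0" using c0 free_idx_iff by auto
  have "\<forall>k i. \<exists>\<alpha> \<beta>. i \<in> {1..p} \<longrightarrow> (\<forall>t. par_L ed (?y t) i k = \<alpha> + \<beta> * t)"
    using par_L_affine_in_offdiag[OF c0] unfolding affine_in_def by fastforce
  then obtain \<alpha> \<beta> where L: "\<And>k i t. i \<in> {1..p} \<Longrightarrow> par_L ed (?y t) i k = \<alpha> k i + \<beta> k i * t"
    by metis
  have \<beta>_j0: "\<beta> j0 i0 = 1"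
  proof -
    have "par_L ed (?y t) i0 j0 = t" for t using ij c0 by (simp add: par_L_edge)
    then show ?thesis using L[OF ij(1), where k=j0 and t=0] L[OF ij(1), where k=j0 and t=1] by simp
  qed
  define A where "A = (\<Sum>k=1..p. par_D y k * quad_form p U (\<beta> k))"
  define B where "B = (\<Sum>k=1..p. par_D y k * (\<Sum>i=1..p. \<Sum>j=1..p. \<alpha> k i * U i j * \<beta> k j + \<beta> k i * U i j * \<alpha> k j))"
  define C where "C = (\<Sum>k=1..p. par_D y k * quad_form p U (\<alpha> k))"
  show ?thesis
  proof
    have "0 < par_D y j0 * quad_form p U (\<beta> j0)"
      using par_D_pos[OF pos, of j0] sym_pd_quad_form_pos[OF U, of "\<beta> j0"] \<beta>_j0 ij by force
    then show "A > 0" unfolding A_def using ij par_D_pos[OF pos] sym_pd_quad_form_nonneg[OF U]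
      by (intro sum_pos2[of "{1..p}" j0]) (auto intro!: mult_nonneg_nonneg simp: less_imp_le)
    fix t
    have "(\<Sum>k=1..p. par_D y k * quad_form p U (\<lambda>i. par_L ed (?y t) i k)) =
        (\<Sum>k=1..p. par_D y k * quad_form p U (\<lambda>i. \<alpha> k i + \<beta> k i * t))"
      by (intro sum.cong refl arg_cong2[where f="(*)"] quad_form_cong) (simp add: L)
    also have "\<dots> = A * t\<^sup>2 + B * t + C"
      unfolding quad_form_affine A_def B_def C_def
      by (simp add: algebra_simps sum.distrib sum_distrib_left sum_distrib_right)
    finally show "(\<Sum>k=1..p. par_D y k * quad_form p U (\<lambda>i. par_L ed (?y t) i k)) = A * t\<^sup>2 + B * t + C" .
  qed
qed

lemma LD_density_gaussian_in_offdiag: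
  assumes U: "sym_pd p U" and c0: "(i0, j0) \<in> I" "j0 < i0"
  shows "\<exists>\<mu> s c. s > 0 \<and> c \<ge> 0 \<and>
    (\<forall>t. LD_density U \<delta> (y((i0, j0) := t)) = c * exp (- ((t - \<mu>)\<^sup>2) / (2 * s)))"
proof (cases "\<forall>l\<in>{1..p}. y (l, l) > 0")
  case False
  then have "LD_density U \<delta> (y((i0, j0) := t)) = 0" for t
    using c0 by (intro LD_density_not_pos) auto
  then show ?thesis by (intro exI[of _ 0] exI[of _ 1] exI[of _ 0]) simp
next
  case pos: True
  let ?y = "\<lambda>t. y((i0, j0) := t)"
  obtain A B C where A: "A > 0"
    and Q: "\<And>t. (\<Sum>k=1..p. par_D y k * quad_form p U (\<lambda>i. par_L ed (?y t) i k)) = A * t\<^sup>2 + B * t + C"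
    using LD_quadratic_in_offdiag[OF U c0 pos] by blast
  have D: "par_D (?y t) k = par_D y k" for t k by (rule par_D_cong) (use c0 in auto)
  have J: "LD_jac (?y t) = LD_jac y" for t unfolding LD_jac_def chain_slope_def D by (rule refl)
  define K where "K = (\<Prod>k=1..p. par_D y k powr (\<delta> k / 2)) * LD_jac y"
  have dens: "LD_density U \<delta> (?y t) = K * exp (- (1/2) * (A * t\<^sup>2 + B * t + C))" for t
  proof -
    have "LD_density U \<delta> (?y t) = (\<Prod>k=1..p. par_D (?y t) k powr (\<delta> k / 2)) * LD_jac (?y t) *
        exp (- (1/2) * (\<Sum>k=1..p. par_D (?y t) k * quad_form p U (\<lambda>i. par_L ed (?y t) i k)))"
      by (rule LD_density_pos) (use pos c0 in auto)
    then show ?thesis unfolding D J Q K_def .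
  qed
  show ?thesis
  proof (intro exI conjI allI)
    show "1 / A > 0" using A by simp
    show "K * exp (- (1/2) * (C - B\<^sup>2 / (4 * A))) \<ge> 0"
      using LD_jac_nonneg by (simp add: K_def prod_nonneg)
    fix t
    show "LD_density U \<delta> (?y t) =
        K * exp (- (1/2) * (C - B\<^sup>2 / (4 * A))) * exp (- ((t - (- B / (2 * A)))\<^sup>2) / (2 * (1 / A)))"
      by (simp only: dens exp_complete_square[OF A] mult.assoc)
  qed
qed

end

section \<open>The conditional densities of \<open>D\<^sup>~\<close>\<close>

lemma par_D_update_diag:
  assumes "1 \<le> m0"
  shows "par_D (y((m0, m0) := t)) k = (if k < m0 then par_D y k else t * (\<Prod>l\<in>{1..k}-{m0}. y (l, l)))"
proof (cases "k < m0")
  case True then show ?thesis by (simp add: par_D_def)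
next
  case False
  then have "m0 \<in> {1..k}" using assms by auto
  then have "par_D (y((m0, m0) := t)) k = t * (\<Prod>l\<in>{1..k}-{m0}. (y((m0, m0) := t)) (l, l))"
    by (simp add: par_D_def prod.remove)
  also have "\<dots> = t * (\<Prod>l\<in>{1..k}-{m0}. y (l, l))" by (auto intro!: prod.cong)
  finally show ?thesis using False by simp
qed

lemma par_L_update_diag_low: "k < m0 \<Longrightarrow> par_L ed (y((m0, m0) := t)) i k = par_L ed y i k"
  by (rule par_L_cong[where j=k]) auto

context GB_ordered
begin

lemma par_L_affine_in_inverse_diag:
  assumes m0: "m0 \<in> {1..p}"
  shows "a \<in> {1..p} \<Longrightarrow> affine_in (\<lambda>t. 1 / t) {0<..} (\<lambda>t. par_L ed (y((m0, m0) := t)) a b)"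
proof (induction b arbitrary: a rule: less_induct)
  case (less b)
  let ?L = "\<lambda>a m t. par_L ed (y((m0, m0) := t)) a m"
  define P where "P k = (\<Prod>l\<in>{1..k}-{m0}. y (l, l))" for k
  have D: "par_D (y((m0, m0) := t)) k = (if k < m0 then par_D y k else t * P k)" for k t
    using par_D_update_diag m0 by (simp add: P_def)
  consider "b < m0" | "m0 \<le> b" "b = 0 \<or> a \<le> b" | "m0 \<le> b" "1 \<le> b" "b < a" "ed a b"
    | "m0 \<le> b" "1 \<le> b" "b < a" "\<not> ed a b" by linarith
  then show ?case
  proof cases
    case 1
    then show ?thesis
      by (intro affine_in_cong[OF _ affine_in_const[where c="par_L ed y a b"]] par_L_update_diag_low)
  next
    case 2
    then show ?thesis by (simp add: par_L_trivial affine_in_const)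
  next
    case 3
    then show ?thesis
      by (intro affine_in_cong[OF _ affine_in_const[where c="y (a, b)"]]) (simp add: par_L_edge)
  next
    case 4
    define T where "T m t = ?L a m t * par_D (y((m0, m0) := t)) m * ?L b m t * (- 1 / (t * P b))" for m t
    have summand: "affine_in (\<lambda>t. 1 / t) {0<..} (T m)" if m: "m \<in> {1..<b}" for m
    proof (cases "m < m0")
      case True
      then have "T m t = (- (par_L ed y a m * par_D y m * par_L ed y b m) / P b) * (1 / t)" for t
        by (simp add: T_def D par_L_update_diag_low)
      then show ?thesis by (intro affine_in_cong[OF _ affine_in_cmult[OF affine_in_basis]])
    next
      case False
      then have T: "T m t = ?L a m t * (- P m / P b) * ?L b m t" if "t > 0" for t
        using that by (simp add: T_def D)
      have "affine_in (\<lambda>t. 1 / t) {0<..} (\<lambda>t. ?L a m t * (- P m / P b) * ?L b m t)"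
      proof (rule affine_in_mult_const_factor)
        show "affine_in (\<lambda>t. 1 / t) {0<..} (?L a m)" "affine_in (\<lambda>t. 1 / t) {0<..} (?L b m)"
          by (rule less.IH; use m less.prems 4 in auto)+
        show "(\<exists>c. \<forall>t\<in>{0<..}. ?L a m t = c) \<or> (\<exists>c. \<forall>t\<in>{0<..}. ?L b m t = c)"
          by (rule GB_product_const_factor[OF _ _ _ _ 4(4)])
            (use m less.prems 4 in \<open>auto simp: par_L_edge\<close>)
      qed
      then show ?thesis by (rule affine_in_cong[rotated]) (simp add: T)
    qed
    have eq: "?L a b t = (\<Sum>m\<in>{1..<b}. T m t)" if "t > 0" for t
      using 4 that D[where k=b and t=t] by (simp add: par_L_nonedge T_def sum_distrib_right sum_negf divide_inverse)
    have "affine_in (\<lambda>t. 1 / t) {0<..} (\<lambda>t. \<Sum>m\<in>{1..<b}. T m t)"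
      by (rule affine_in_sum) (use summand in auto)
    then show ?thesis by (rule affine_in_cong[rotated]) (rule eq, simp)
  qed
qed

end

context ordered_graph
begin

lemma prod_par_D_powr_update_diag:
  assumes m0: "m0 \<in> {1..p}" and \<delta>: "\<forall>i\<in>{1..p}. \<delta> i > 0"
  obtains C e where "C \<ge> 0" "e > 0"
    "\<And>t. t > 0 \<Longrightarrow> (\<Prod>k=1..p. par_D (y((m0, m0) := t)) k powr (\<delta> k / 2)) = C * t powr e"
proof
  let ?P = "\<lambda>k. \<Prod>l\<in>{1..k}-{m0}. y (l, l)"
  have split: "{1..p} = {1..<m0} \<union> {m0..p}" "{1..<m0} \<inter> {m0..p} = {}" using m0 by auto
  show "(\<Prod>k\<in>{1..<m0}. par_D y k powr (\<delta> k / 2)) * (\<Prod>k\<in>{m0..p}. ?P k powr (\<delta> k / 2)) \<ge> 0"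
    by (simp add: prod_nonneg)
  show "(\<Sum>k\<in>{m0..p}. \<delta> k / 2) > 0"
    by (rule sum_pos2[of _ m0]) (use m0 \<delta> in \<open>auto intro: less_imp_le\<close>)
  fix t :: real assume t: "t > 0"
  have "(\<Prod>k=1..p. par_D (y((m0, m0) := t)) k powr (\<delta> k / 2)) =
      (\<Prod>k\<in>{1..<m0}. par_D (y((m0, m0) := t)) k powr (\<delta> k / 2)) *
      (\<Prod>k\<in>{m0..p}. par_D (y((m0, m0) := t)) k powr (\<delta> k / 2))"
    unfolding split(1) by (rule prod.union_disjoint) (use split in auto)
  also have "\<dots> = (\<Prod>k\<in>{1..<m0}. par_D y k powr (\<delta> k / 2)) *
      (\<Prod>k\<in>{m0..p}. t powr (\<delta> k / 2) * ?P k powr (\<delta> k / 2))"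
    using m0 t by (auto simp: par_D_update_diag powr_mult prod_nonneg intro!: prod.cong arg_cong2[where f="(*)"])
  also have "\<dots> = (\<Prod>k\<in>{1..<m0}. par_D y k powr (\<delta> k / 2)) * (\<Prod>k\<in>{m0..p}. ?P k powr (\<delta> k / 2)) *
      t powr (\<Sum>k\<in>{m0..p}. \<delta> k / 2)"
    using t by (simp add: prod.distrib powr_sum mult_ac)
  finally show "(\<Prod>k=1..p. par_D (y((m0, m0) := t)) k powr (\<delta> k / 2)) = \<dots>" .
qed

lemma LD_jac_update_diag:
  assumes m0: "m0 \<in> {1..p}" and other: "\<forall>l\<in>{1..p}. l \<noteq> m0 \<longrightarrow> y (l, l) > 0"
  obtains C N where "C \<ge> 0" "\<And>t. t > 0 \<Longrightarrow> LD_jac (y((m0, m0) := t)) = C * t ^ N"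
proof
  let ?P = "\<lambda>k. \<Prod>l\<in>{1..k}-{m0}. y (l, l)"
  define col where "col c = (case c of (a, b) \<Rightarrow> if a = b then b - 1 else b)" for c :: "nat \<times> nat"
  define Cf where "Cf c = (if m0 \<le> col c then ?P (col c) else \<bar>par_D y (col c)\<bar>)" for c
  have P: "?P k > 0" if "k \<le> p" for k by (rule prod_pos) (use other that in auto)
  have col: "col c \<le> p" if "c \<in> I" for c using that free_idx_iff by (cases c) (auto simp: col_def)
  show "(\<Prod>c\<in>I. Cf c) \<ge> 0" unfolding Cf_def by (rule prod_nonneg) (use P col in \<open>auto intro: less_imp_le\<close>)
  fix t :: real assume t: "t > 0"
  have "LD_jac (y((m0, m0) := t)) = (\<Prod>c\<in>I. \<bar>par_D (y((m0, m0) := t)) (col c)\<bar>)"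
    unfolding LD_jac_def by (rule prod.cong) (auto simp: chain_slope_def col_def)
  also have "\<dots> = (\<Prod>c\<in>I. t ^ (if m0 \<le> col c then 1 else 0) * Cf c)"
    using m0 t P col by (intro prod.cong refl) (auto simp: par_D_update_diag Cf_def abs_mult abs_of_pos)
  also have "\<dots> = (\<Prod>c\<in>I. Cf c) * t ^ (\<Sum>c\<in>I. if m0 \<le> col c then 1 else 0)"
    by (simp add: prod.distrib power_sum mult.commute)
  finally show "LD_jac (y((m0, m0) := t)) = (\<Prod>c\<in>I. Cf c) * t ^ (\<Sum>c\<in>I. if m0 \<le> col c then 1 else 0)" .
qed

end

context GB_ordered
begin

lemma LD_quadratic_in_diag:
  assumes U: "sym_pd p U" and m0: "m0 \<in> {1..p}" and other: "\<forall>l\<in>{1..p}. l \<noteq> m0 \<longrightarrow> y (l, l) > 0"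
  obtains a b c where "a > 0" "b \<ge> 0" "\<And>t. t > 0 \<Longrightarrow>
    (\<Sum>k=1..p. par_D (y((m0, m0) := t)) k * quad_form p U (\<lambda>i. par_L ed (y((m0, m0) := t)) i k)) = c + a * t + b / t"
proof -
  let ?y = "\<lambda>t. y((m0, m0) := t)"
  define P where "P k = (\<Prod>l\<in>{1..k}-{m0}. y (l, l))" for k
  have P: "P k > 0" if "k \<le> p" for k unfolding P_def by (rule prod_pos) (use other that in auto)
  have "\<forall>k i. \<exists>\<alpha> \<beta>. i \<in> {1..p} \<longrightarrow> (\<forall>t>0. par_L ed (?y t) i k = \<alpha> + \<beta> * (1 / t))"
    using par_L_affine_in_inverse_diag[OF m0] unfolding affine_in_def by fastforce
  then obtain \<alpha> \<beta> where L: "\<And>k i t. i \<in> {1..p} \<Longrightarrow> t > 0 \<Longrightarrow> par_L ed (?y t) i k = \<alpha> k i + \<beta> k i * (1 / t)"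
    by metis
  have \<alpha>_m0: "\<alpha> m0 m0 = 1"
    using L[of m0 1 m0] L[of m0 2 m0] m0 par_L_diag[of m0] by auto
  define W where "W z k = quad_form p U (\<lambda>i. par_L ed z i k)" for z k
  define c where "c = (\<Sum>k\<in>{1..<m0}. par_D y k * W y k) +
    (\<Sum>k\<in>{m0..p}. P k * (\<Sum>i=1..p. \<Sum>j=1..p. \<alpha> k i * U i j * \<beta> k j + \<beta> k i * U i j * \<alpha> k j))"
  define a where "a = (\<Sum>k\<in>{m0..p}. P k * quad_form p U (\<alpha> k))"
  define b where "b = (\<Sum>k\<in>{m0..p}. P k * quad_form p U (\<beta> k))"
  show ?thesis
  proof
    have "0 < P m0 * quad_form p U (\<alpha> m0)"
      using P[of m0] m0 sym_pd_quad_form_pos[OF U, of "\<alpha> m0"] \<alpha>_m0 by force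
    then show "a > 0" unfolding a_def using m0 P sym_pd_quad_form_nonneg[OF U]
      by (intro sum_pos2[of _ m0]) (auto intro!: mult_nonneg_nonneg simp: less_imp_le)
    show "b \<ge> 0" unfolding b_def using P sym_pd_quad_form_nonneg[OF U]
      by (intro sum_nonneg) (auto intro!: mult_nonneg_nonneg simp: less_imp_le)
    fix t :: real assume t: "t > 0"
    have split: "{1..p} = {1..<m0} \<union> {m0..p}" "{1..<m0} \<inter> {m0..p} = {}" using m0 by auto
    have "(\<Sum>k=1..p. par_D (?y t) k * W (?y t) k) =
        (\<Sum>k\<in>{1..<m0}. par_D (?y t) k * W (?y t) k) + (\<Sum>k\<in>{m0..p}. par_D (?y t) k * W (?y t) k)"
      unfolding split(1) by (rule sum.union_disjoint) (use split in auto)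
    also have "(\<Sum>k\<in>{1..<m0}. par_D (?y t) k * W (?y t) k) = (\<Sum>k\<in>{1..<m0}. par_D y k * W y k)"
      unfolding W_def using m0 by (auto simp: par_D_update_diag par_L_update_diag_low intro!: sum.cong)
    also have "(\<Sum>k\<in>{m0..p}. par_D (?y t) k * W (?y t) k) =
        (\<Sum>k\<in>{m0..p}. (t * P k) * quad_form p U (\<lambda>i. \<alpha> k i + \<beta> k i * (1 / t)))"
      unfolding W_def using m0 t
      by (intro sum.cong refl arg_cong2[where f="(*)"] quad_form_cong) (auto simp: par_D_update_diag P_def L)
    also have "\<dots> = (\<Sum>k\<in>{m0..p}. P k * (\<Sum>i=1..p. \<Sum>j=1..p. \<alpha> k i * U i j * \<beta> k j + \<beta> k i * U i j * \<alpha> k j)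
        + P k * quad_form p U (\<alpha> k) * t + P k * quad_form p U (\<beta> k) / t)"
      unfolding quad_form_affine using t by (intro sum.cong refl) (simp add: field_simps power2_eq_square)
    also have "\<dots> = (\<Sum>k\<in>{m0..p}. P k * (\<Sum>i=1..p. \<Sum>j=1..p. \<alpha> k i * U i j * \<beta> k j + \<beta> k i * U i j * \<alpha> k j))
        + a * t + b / t"
      unfolding a_def b_def by (simp add: sum.distrib sum_distrib_right sum_divide_distrib)
    finally show "(\<Sum>k=1..p. par_D (?y t) k * quad_form p U (\<lambda>i. par_L ed (?y t) i k)) = c + a * t + b / t"
      unfolding W_def c_def by (simp only: add.assoc)
  qed
qed

lemma LD_density_GIG_in_diag:
  assumes U: "sym_pd p U" and \<delta>: "\<forall>i\<in>{1..p}. \<delta> i > 0" and m0: "m0 \<in> {1..p}"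
  shows "\<exists>\<alpha> a b c. c \<ge> 0 \<and> a > 0 \<and> (b > 0 \<or> (b = 0 \<and> \<alpha> > -1)) \<and>
     (\<forall>t. LD_density U \<delta> (y((m0, m0) := t)) = (if t > 0 then c * t powr \<alpha> * exp (- a * t - b / t) else 0))"
proof (cases "\<forall>l\<in>{1..p}. l \<noteq> m0 \<longrightarrow> y (l, l) > 0")
  case False
  then have "LD_density U \<delta> (y((m0, m0) := t)) = 0" for t
    by (intro LD_density_not_pos) auto
  then show ?thesis by (intro exI[of _ 0] exI[of _ 1] exI[of _ 1] exI[of _ 0]) simp
next
  case other: True
  let ?y = "\<lambda>t. y((m0, m0) := t)"
  have pos_iff: "(\<forall>l\<in>{1..p}. ?y t (l, l) > 0) \<longleftrightarrow> t > 0" for t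
    using other m0 by auto
  obtain C1 e where C1: "C1 \<ge> 0" "e > 0"
    "\<And>t. t > 0 \<Longrightarrow> (\<Prod>k=1..p. par_D (?y t) k powr (\<delta> k / 2)) = C1 * t powr e"
    using prod_par_D_powr_update_diag[OF m0 \<delta>] by blast
  obtain C2 N where C2: "C2 \<ge> 0" "\<And>t. t > 0 \<Longrightarrow> LD_jac (?y t) = C2 * t ^ N"
    using LD_jac_update_diag[OF m0 other] by blast
  obtain a b c where Q: "a > 0" "b \<ge> 0" "\<And>t. t > 0 \<Longrightarrow>
      (\<Sum>k=1..p. par_D (?y t) k * quad_form p U (\<lambda>i. par_L ed (?y t) i k)) = c + a * t + b / t"
    using LD_quadratic_in_diag[OF U m0 other] by blast
  show ?thesis
  proof (intro exI conjI allI)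
    show "C1 * C2 * exp (- c / 2) \<ge> 0" "a / 2 > 0" "b / 2 > 0 \<or> (b / 2 = 0 \<and> e + real N > -1)"
      using C1 C2 Q by auto
    fix t :: real
    show "LD_density U \<delta> (?y t) =
        (if t > 0 then C1 * C2 * exp (- c / 2) * t powr (e + real N) * exp (- (a / 2) * t - (b / 2) / t) else 0)"
    proof (cases "t > 0")
      case True
      have "LD_density U \<delta> (?y t) = (\<Prod>k=1..p. par_D (?y t) k powr (\<delta> k / 2)) * LD_jac (?y t) *
          exp (- (1/2) * (\<Sum>k=1..p. par_D (?y t) k * quad_form p U (\<lambda>i. par_L ed (?y t) i k)))"
        by (rule LD_density_pos) (use pos_iff True in blast)
      also have "\<dots> = C1 * C2 * exp (- c / 2) * t powr (e + real N) * exp (- (a / 2) * t - (b / 2) / t)"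
        unfolding C1(3)[OF True] C2(2)[OF True] Q(3)[OF True]
        using True by (simp add: powr_add powr_realpow exp_add[symmetric] field_simps)
      finally show ?thesis using True by simp
    next
      case False
      then have "LD_density U \<delta> (?y t) = 0" by (intro LD_density_not_pos) (use pos_iff in blast)
      then show ?thesis using False by simp
    qed
  qed
qed

end

theorem theorem3:
  fixes V :: "'a set" and E :: "'a set set" and \<sigma> :: "'a \<Rightarrow> nat"
    and U :: "nat \<Rightarrow> nat \<Rightarrow> real" and \<delta> :: "nat \<Rightarrow> real" and p :: nat
  assumes "simple_graph V E"
    and "card V = p"
    and "GB_graph V E"
    and "GB_ordering V E \<sigma>"
    and "sym_pd p U"
    and "\<forall>i\<in>{1..p}. \<delta> i > 0"
  shows "\<exists>g. g \<in> borel_measurable (free_lebesgue V E \<sigma>) \<and>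
     distr (gen_G_wishart V E \<sigma> U \<delta>) (free_lebesgue V E \<sigma>) (LD_coords V E \<sigma>)
       = density (free_lebesgue V E \<sigma>) g \<and>
     (\<forall>y\<in>space (free_lebesgue V E \<sigma>). \<forall>i j. (i, j) \<in> free_idx V E \<sigma> \<and> j < i \<longrightarrow>
        (\<exists>\<mu> s c. s > 0 \<and> c \<ge> 0 \<and>
           (\<forall>t::real. g (y((i, j) := t)) = ennreal (c * exp (- ((t - \<mu>)\<^sup>2) / (2 * s)))))) \<and>
     (\<forall>y\<in>space (free_lebesgue V E \<sigma>). \<forall>k\<in>{1..p}.
        (\<exists>\<alpha> a b c. c \<ge> 0 \<and> a > 0 \<and> (b > 0 \<or> (b = 0 \<and> \<alpha> > -1)) \<and>
           (\<forall>t::real. g (y((k, k) := t)) =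
              (if t > 0 then ennreal (c * t powr \<alpha> * exp (- a * t - b / t)) else 0))))"
proof -
  interpret GB_ordered V E \<sigma> p
    using assms(2,4) by unfold_locales (auto simp: GB_ordering_def)
  obtain K where K: "K \<ge> 0"
    "distr (gen_G_wishart V E \<sigma> U \<delta>) M (LD_coords V E \<sigma>) = density M (\<lambda>z. ennreal (K * LD_density U \<delta> z))"
    by (rule distr_LD_coords)
  show ?thesis
  proof (intro exI[of _ "\<lambda>z. ennreal (K * LD_density U \<delta> z)"] conjI ballI allI impI)
    show "(\<lambda>z. ennreal (K * LD_density U \<delta> z)) \<in> borel_measurable (free_lebesgue V E \<sigma>)"
      unfolding free_lebesgue_def using borel_measurable_LD_density by measurable
    show "distr (gen_G_wishart V E \<sigma> U \<delta>) (free_lebesgue V E \<sigma>) (LD_coords V E \<sigma>) =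
        density (free_lebesgue V E \<sigma>) (\<lambda>z. ennreal (K * LD_density U \<delta> z))"
      using K(2) by (simp add: free_lebesgue_def)
  next
    fix y i j assume "(i, j) \<in> I \<and> j < i"
    then obtain \<mu> s c where "s > 0" "c \<ge> 0"
      "\<And>t. LD_density U \<delta> (y((i, j) := t)) = c * exp (- ((t - \<mu>)\<^sup>2) / (2 * s))"
      using LD_density_gaussian_in_offdiag[OF assms(5)] by blast
    then show "\<exists>\<mu> s c. s > 0 \<and> c \<ge> 0 \<and>
        (\<forall>t. ennreal (K * LD_density U \<delta> (y((i, j) := t))) = ennreal (c * exp (- ((t - \<mu>)\<^sup>2) / (2 * s))))"
      using K(1) by (intro exI[of _ \<mu>] exI[of _ s] exI[of _ "K * c"]) (simp add: mult.assoc)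
  next
    fix y k assume "k \<in> {1..p}"
    then obtain \<alpha> a b c where "c \<ge> 0" "a > 0" "b > 0 \<or> (b = 0 \<and> \<alpha> > -1)"
      "\<And>t. LD_density U \<delta> (y((k, k) := t)) = (if t > 0 then c * t powr \<alpha> * exp (- a * t - b / t) else 0)"
      using LD_density_GIG_in_diag[OF assms(5,6)] by blast
    then show "\<exists>\<alpha> a b c. c \<ge> 0 \<and> a > 0 \<and> (b > 0 \<or> (b = 0 \<and> \<alpha> > -1)) \<and>
        (\<forall>t. ennreal (K * LD_density U \<delta> (y((k, k) := t))) =
          (if t > 0 then ennreal (c * t powr \<alpha> * exp (- a * t - b / t)) else 0))"
      using K(1) by (intro exI[of _ \<alpha>] exI[of _ a] exI[of _ b] exI[of _ "K * c"]) (simp add: mult.assoc)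
  qed
qed

end
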